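(* Let $(\mu,\nu)\in\boldsymbol{\mathcal P}$ with common mean $m$, and consider the RRU with initial composition $(x,y)\in\mathbb S$, $D_n=X_n+Y_n$. Then for all $k=1,2,\dots$, $$\mathbb E\Big(\frac1{D_k}\Big)\le\frac{1+(\beta-m)/D_0}{D_0+m(k-1)+\beta}.$$ If in addition $D_0\ge2\beta$, then for all $k,n=1,2,\dots$ and all $d\ge c\ge0$, $$\Big|\mathbb E\Big(\frac1{c+D_{k+n}}-\frac1{d+D_{k+n}}\,\Big|\,\mathcal A_n\Big)\Big|\le\frac{\beta-m+d}{m}\Big(\frac1{b_k}-\frac1{b_{k+1}}\Big),$$ where $b_k=c+D_n-\beta+mk$.
   Context: Fix $0<m_0\le\beta<\infty$. $\boldsymbol{\mathcal P}$: pairs $(\mu,\nu)$ of probability measures on $[0,\beta]$ with $\int k\,\mu(dk)=\int k\,\nu(dk)=m\ge m_0$. $\mathbb S=[0,\infty)^2\setminus\{(0,0)\}$. RRU: with $\{U_n\}$ i.i.d. uniform$[0,1]$ independent of i.i.d. $\{(V_n,W_n)\}$ with uniform$[0,1]$ marginals, $R_X(n)=q_\mu(V_n)$, $R_Y(n)=q_\nu(W_n)$ (quantile functions), $X_0=x,Y_0=y$, $X_{n+1}=X_n+R_X(n+1)\mathbb I(n+1)$, $Y_{n+1}=Y_n+R_Y(n+1)(1-\mathbb I(n+1))$, $\mathbb I(n+1)=\mathbf 1\{U_{n+1}\le X_n/(X_n+Y_n)\}$. $\mathcal A_n=\sigma(\mathbb I(1),R_X(1),R_Y(1),\dots,\mathbb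 I(n),R_X(n),R_Y(n))$. *)

theory Defs
  imports "HOL-Probability.Probability"
begin

definition quantile_fn :: "real measure \<Rightarrow> real \<Rightarrow> real" where
  "quantile_fn \<mu> v = Inf {t. v \<le> measure \<mu> {..t}}"

text \<open>The randomized response urn (RRU). Composition (X_n, Y_n) as a function
  of the sample point; U, V, W are indexed by 1,2,... (index 0 unused).\<close>
fun rru :: "real measure \<Rightarrow> real measure \<Rightarrow> real \<Rightarrow> real \<Rightarrow>
    (nat \<Rightarrow> 'w \<Rightarrow> real) \<Rightarrow> (nat \<Rightarrow> 'w \<Rightarrow> real) \<Rightarrow> (nat \<Rightarrow> 'w \<Rightarrow> real) \<Rightarrow>
    nat \<Rightarrow> 'w \<Rightarrow> real \<times> real" where
  "rru \<mu> \<nu> x y U V W 0 \<omega> = (x, y)"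
| "rru \<mu> \<nu> x y U V W (Suc n) \<omega> =
     (let (X, Y) = rru \<mu> \<nu> x y U V W n \<omega>;
          I = (U (Suc n) \<omega> \<le> X / (X + Y))
      in (X + (if I then quantile_fn \<mu> (V (Suc n) \<omega>) else 0),
          Y + (if I then 0 else quantile_fn \<nu> (W (Suc n) \<omega>))))"

definition rru_ind :: "real measure \<Rightarrow> real measure \<Rightarrow> real \<Rightarrow> real \<Rightarrow>
    (nat \<Rightarrow> 'w \<Rightarrow> real) \<Rightarrow> (nat \<Rightarrow> 'w \<Rightarrow> real) \<Rightarrow> (nat \<Rightarrow> 'w \<Rightarrow> real) \<Rightarrow>
    nat \<Rightarrow> 'w \<Rightarrow> bool" where
  "rru_ind \<mu> \<nu> x y U V W n \<omega> =
     (case rru \<mu> \<nu> x y U V W (n - 1) \<omega> of (X, Y) \<Rightarrow> U n \<omega> \<le> X / (X + Y))"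

definition rru_D :: "real measure \<Rightarrow> real measure \<Rightarrow> real \<Rightarrow> real \<Rightarrow>
    (nat \<Rightarrow> 'w \<Rightarrow> real) \<Rightarrow> (nat \<Rightarrow> 'w \<Rightarrow> real) \<Rightarrow> (nat \<Rightarrow> 'w \<Rightarrow> real) \<Rightarrow>
    nat \<Rightarrow> 'w \<Rightarrow> real" where
  "rru_D \<mu> \<nu> x y U V W n \<omega> = fst (rru \<mu> \<nu> x y U V W n \<omega>) + snd (rru \<mu> \<nu> x y U V W n \<omega>)"

text \<open>The filtration A_n = sigma(I(1),R_X(1),R_Y(1),...,I(n),R_X(n),R_Y(n)),
  with R_X(i) = q_mu(V_i), R_Y(i) = q_nu(W_i).\<close>
definition rru_filt :: "'w measure \<Rightarrow> real measure \<Rightarrow> real measure \<Rightarrow> real \<Rightarrow> real \<Rightarrow>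
    (nat \<Rightarrow> 'w \<Rightarrow> real) \<Rightarrow> (nat \<Rightarrow> 'w \<Rightarrow> real) \<Rightarrow> (nat \<Rightarrow> 'w \<Rightarrow> real) \<Rightarrow>
    nat \<Rightarrow> 'w measure" where
  "rru_filt M \<mu> \<nu> x y U V W n =
     sigma (space M)
       (\<Union>i\<in>{1..n}. {(\<lambda>\<omega>. (rru_ind \<mu> \<nu> x y U V W i \<omega>,
                            quantile_fn \<mu> (V i \<omega>), quantile_fn \<nu> (W i \<omega>))) -` A \<inter> space M
                     | A. A \<in> sets (count_space UNIV \<Otimes>\<^sub>M borel \<Otimes>\<^sub>M borel)})"

definition prob_on_interval :: "real \<Rightarrow> real measure \<Rightarrow> bool" where
  "prob_on_interval \<beta> \<mu> \<longleftrightarrow> prob_space \<mu> \<and> sets \<mu> = sets borel \<and> emeasure \<mu> {0..\<beta>} = 1"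

end

theory Submission
  imports Defs
begin

text \<open>Each draw adds a replacement in \<open>[0, \<beta>]\<close> which is independent of the past and has mean \<open>m\<close>,
  whichever colour is drawn. Against a convex function \<open>g\<close> such a replacement is dominated by
  the two-point law that adds \<open>\<beta>\<close> with probability \<open>m / \<beta>\<close>: the chord of \<open>g\<close> over \<open>[t, t + \<beta>]\<close>
  gives \<open>E g (t + R) \<le> g t + m / \<beta> * (g (t + \<beta>) - g t)\<close>.

  For the first bound apply this to the convex potential
  \<open>h\<^sub>J t = (t + \<beta> - m) / (t * (t + \<beta> - m + J))\<close>: one draw turns \<open>E h\<^sub>J (D\<^sub>i\<^sub>+\<^sub>1)\<close> into at most
  \<open>E h\<^sub>J\<^sub>+\<^sub>m (D\<^sub>i)\<close>, and since \<open>h\<^sub>0 t = 1 / t\<close>, going back from time \<open>k\<close> to time \<open>0\<close> gives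
  \<open>E (1 / D\<^sub>k) \<le> h\<^sub>m\<^sub>k (D\<^sub>0)\<close>, which is the stated bound.

  For the second bound, on every event of \<open>\<A>\<^sub>n\<close> the mean of \<open>1 / (c + D\<^sub>n\<^sub>+\<^sub>k)\<close> is at most that of
  the two-point urn started at \<open>D\<^sub>n\<close>, a binomial average which Jensen's inequality bounds by
  \<open>1 / (c + D\<^sub>n - \<beta> + m * (k + 1))\<close>; the mean of \<open>1 / (d + D\<^sub>n\<^sub>+\<^sub>k)\<close> is at least
  \<open>1 / (d + D\<^sub>n + m * k)\<close> by the tangent of \<open>1 / t\<close>, one draw at a time. The difference of the two
  bounds is at most the stated one, and the conditional expectation is nonnegative as \<open>c \<le> d\<close>.\<close>

lemma
  fixes \<beta> :: real and \<mu> :: "real measure"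
  assumes \<mu>: "prob_on_interval \<beta> \<mu>"
  shows quantile_fn_range: "\<And>v. v \<in> {0<..<1} \<Longrightarrow> 0 \<le> quantile_fn \<mu> v \<and> quantile_fn \<mu> v \<le> \<beta>"
    and borel_measurable_quantile_fn: "quantile_fn \<mu> \<in> borel_measurable borel"
    and integral_quantile_fn_uniform:
      "(\<integral>v. quantile_fn \<mu> v \<partial>uniform_measure lborel {0..1}) = (\<integral>t. t \<partial>\<mu>)"
proof -
  interpret P: prob_space \<mu> using \<mu> by (simp add: prob_on_interval_def)
  interpret cdf_distribution \<mu>
    by unfold_locales (use \<mu> in \<open>simp add: prob_on_interval_def\<close>)
  have quantile_eq: "quantile_fn \<mu> = I" by (simp add: quantile_fn_def cdf_def fun_eq_iff)
  have sets_\<mu>: "sets \<mu> = sets borel" using \<mu> by (simp add: prob_on_interval_def)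
  have prob_support: "measure \<mu> {0..\<beta>} = 1" using \<mu> by (simp add: prob_on_interval_def measure_def)
  have C_\<beta>: "C \<beta> = 1"
  proof -
    have "measure \<mu> {0..\<beta>} \<le> measure \<mu> {..\<beta>}"
      by (rule P.finite_measure_mono) (auto simp: sets_\<mu>)
    then show ?thesis using prob_support P.prob_le_1[of "{..\<beta>}"] by (simp add: cdf_def)
  qed
  have C_neg: "C t = 0" if "t < 0" for t
  proof -
    have "measure \<mu> {..t} \<le> measure \<mu> (UNIV - {0..\<beta>})"
      by (rule P.finite_measure_mono) (use that in \<open>auto simp: sets_\<mu>\<close>)
    also have "\<dots> = 0"
      using P.prob_compl[of "{0..\<beta>}"] prob_support sets_eq_imp_space_eq[OF sets_\<mu>]
      by (simp add: sets_\<mu>)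
    finally show ?thesis using measure_nonneg[of \<mu> "{..t}"] by (simp add: cdf_def)
  qed
  show "0 \<le> quantile_fn \<mu> v \<and> quantile_fn \<mu> v \<le> \<beta>" if v: "v \<in> {0<..<1}" for v
  proof
    show "quantile_fn \<mu> v \<le> \<beta>" using pseudoinverse[of v \<beta>] v C_\<beta> quantile_eq by simp
    show "0 \<le> quantile_fn \<mu> v"
    proof (rule ccontr)
      assume "\<not> 0 \<le> quantile_fn \<mu> v"
      then have "I v < 0" using quantile_eq by simp
      then show False using pseudoinverse[of v "I v"] C_neg[of "I v"] v by simp
    qed
  qed
  show quantile_measurable: "quantile_fn \<mu> \<in> borel_measurable borel"
  proof -
    have pieces: "quantile_fn \<mu> = (\<lambda>v. (if v \<in> {0<..<1} then I v else 0)
       + (if v \<le> 0 then Inf UNIV else 0) + (if v = 1 then I 1 else 0)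
       + (if 1 < v then Inf {} else 0))"
    proof
      fix v
      have "{t. v \<le> C t} = UNIV" if "v \<le> 0" using that cdf_nonneg by (auto intro: order.trans)
      moreover have "{t. v \<le> C t} = {}" if "1 < v"
        using that cdf_bounded_prob by (auto simp: not_le) (meson le_less_trans not_le)
      ultimately show "quantile_fn \<mu> v = (if v \<in> {0<..<1} then I v else 0)
       + (if v \<le> 0 then Inf UNIV else 0) + (if v = 1 then I 1 else 0)
       + (if 1 < v then Inf {} else 0)"
        unfolding quantile_eq by auto
    qed
    have inner: "(\<lambda>v. if v \<in> {0<..<1} then I v else 0) \<in> borel_measurable borel"
      using measurable_CI measurable_restrict_space_iff[of "{0<..<1::real}" borel 0 borel I] by simp
    show ?thesis unfolding pieces by (intro borel_measurable_add inner) measurable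
  qed
  have I_measurable: "I \<in> borel_measurable borel" using quantile_measurable quantile_eq by simp
  \<comment> \<open>The uniform law gives no mass to the endpoints, where the quantile takes junk values.\<close>
  have "(\<integral>v. quantile_fn \<mu> v \<partial>uniform_measure lborel {0..1})
      = (\<integral>v. I v \<partial>density lborel (\<lambda>v. ennreal (indicator {0..1::real} v)))"
    unfolding uniform_measure_def quantile_eq by (simp add: ennreal_indicator divide_ennreal_def)
  also have "\<dots> = (\<integral>v. indicator {0..1::real} v * I v \<partial>lborel)"
    by (subst integral_density) (use I_measurable in auto)
  also have "\<dots> = (\<integral>v. indicator {0<..<1::real} v * I v \<partial>lborel)"
  proof (rule integral_cong_AE)
    show "AE v in lborel. indicator {0..1::real} v * I v = indicator {0<..<1::real} v * I v"
      using AE_lborel_singleton[of 0] AE_lborel_singleton[of 1]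
      by eventually_elim (auto simp: indicator_def)
  qed (use I_measurable in auto)
  also have "\<dots> = (\<integral>t. t \<partial>distr (restrict_space lborel {0<..<1::real}) borel I)"
    by (subst integral_distr)
       (auto intro: measurable_restrict_space1 I_measurable simp: integral_restrict_space)
  also have "\<dots> = (\<integral>t. t \<partial>\<mu>)" using distr_I_eq_M by simp
  finally show "(\<integral>v. quantile_fn \<mu> v \<partial>uniform_measure lborel {0..1}) = (\<integral>t. t \<partial>\<mu>)" .
qed

lemma convex_on_cong:
  assumes "\<And>x. x \<in> S \<Longrightarrow> f x = g x"
  shows "convex_on S f \<longleftrightarrow> convex_on S g"
  using assms unfolding convex_on_def convex_def by (smt (verit, ccfv_SIG))

lemma convex_on_inverse_add:
  fixes s :: real
  assumes "S \<subseteq> {-s<..}" "convex S"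
  shows "convex_on S (\<lambda>t. 1 / (s + t))"
proof (rule convex_onI)
  fix u x y :: real assume u: "0 < u" "u < 1" and xy: "x \<in> S" "y \<in> S"
  have "convex_on {0<..} (inverse :: real \<Rightarrow> real)" by (rule convex_on_inverse) auto
  moreover have "0 < s + x" "0 < s + y" using xy assms(1) by auto
  ultimately have "inverse ((1 - u) *\<^sub>R (s + x) + u *\<^sub>R (s + y))
      \<le> (1 - u) * inverse (s + x) + u * inverse (s + y)"
    using u by (intro convex_onD) auto
  then show "1 / (s + ((1 - u) *\<^sub>R x + u *\<^sub>R y)) \<le> (1 - u) * (1 / (s + x)) + u * (1 / (s + y))"
    by (simp add: divide_inverse algebra_simps)
qed (rule assms(2))

lemma convex_on_le_chord:
  fixes g :: "real \<Rightarrow> real"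
  assumes g: "convex_on {0<..} g" and y: "0 < y" and r: "0 \<le> r" "r \<le> \<beta>"
  shows "g (y + r) \<le> g y + r / \<beta> * (g (y + \<beta>) - g y)"
proof -
  have "convex_on {y..y + \<beta>} g" by (rule convex_on_subset[OF g]) (use y in auto)
  then have "g (y + r) \<le> (g (y + \<beta>) - g y) / (y + \<beta> - y) * (y + r - y) + g y"
    using r by (intro convex_onD_Icc') auto
  also have "\<dots> = g y + r / \<beta> * (g (y + \<beta>) - g y)" by simp
  finally show ?thesis .
qed

text \<open>Used with \<open>a = \<beta> - m\<close>: then \<open>urn_potential a 0 t = 1 / t\<close> and \<open>urn_potential a (m * k) D\<^sub>0\<close> is
  the first bound of the theorem.\<close>
definition urn_potential :: "real \<Rightarrow> real \<Rightarrow> real \<Rightarrow> real" where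
  "urn_potential a J t = (t + a) / (t * (t + a + J))"

lemma borel_measurable_urn_potential [measurable]: "urn_potential a J \<in> borel_measurable borel"
  unfolding urn_potential_def by measurable

lemma urn_potential_bounds:
  assumes "t > 0" "a \<ge> 0" "J \<ge> 0"
  shows "0 \<le> urn_potential a J t" "urn_potential a J t \<le> 1 / t"
proof -
  show "0 \<le> urn_potential a J t" using assms unfolding urn_potential_def by simp
  have "urn_potential a J t = (t + a) / (t + a + J) * (1 / t)" unfolding urn_potential_def by simp
  also have "\<dots> \<le> 1 * (1 / t)" using assms by (intro mult_right_mono) auto
  finally show "urn_potential a J t \<le> 1 / t" by simp
qed

lemma convex_on_urn_potential:
  assumes "a \<ge> 0" "J \<ge> 0"
  shows "convex_on {0<..} (urn_potential a J)"
proof (cases "a + J = 0")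
  case True
  then have "a = 0" "J = 0" using assms by auto
  then have "convex_on {0<..} (urn_potential a J) \<longleftrightarrow> convex_on {0<..} (\<lambda>t. 1 / (0 + t))"
    by (intro convex_on_cong) (simp add: urn_potential_def)
  then show ?thesis using convex_on_inverse_add[of "{0<..}" 0] by simp
next
  case False
  with assms have "a + J > 0" by simp
  then have "urn_potential a J t = a / (a + J) * (1 / (0 + t)) + J / (a + J) * (1 / ((a + J) + t))"
    if "t > 0" for t
  proof -
    have "t \<noteq> 0" "a + J \<noteq> 0" "t + a + J \<noteq> 0" "a + J + t \<noteq> 0" using that \<open>a + J > 0\<close> by auto
    then show ?thesis
      unfolding urn_potential_def by (simp add: divide_simps) (simp add: algebra_simps)
  qed
  then have "convex_on {0<..} (urn_potential a J) \<longleftrightarrow>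
      convex_on {0<..} (\<lambda>t. a / (a + J) * (1 / (0 + t)) + J / (a + J) * (1 / ((a + J) + t)))"
    by (intro convex_on_cong) simp
  moreover have "convex_on {0<..}
      (\<lambda>t. a / (a + J) * (1 / (0 + t)) + J / (a + J) * (1 / ((a + J) + t)))"
    using assms \<open>a + J > 0\<close> by (intro convex_on_add convex_on_cmul convex_on_inverse_add) auto
  ultimately show ?thesis by simp
qed

lemma urn_potential_drift_le:
  assumes t: "t > 0" and a: "a \<ge> 0" and J: "J \<ge> 0" and m: "m > 0"
  shows "urn_potential a J t + m / (a + m) * (urn_potential a J (t + (a + m)) - urn_potential a J t)
    \<le> urn_potential a (J + m) t"
proof -
  define b where "b = a + m"
  define N0 where "N0 = t + a"
  define D0 where "D0 = t * (t + a + J)"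
  define N1 where "N1 = t + b + a"
  define D1 where "D1 = (t + b) * (t + b + a + J)"
  define D2 where "D2 = t * (t + a + J + m)"
  have pos: "b > 0" "D0 > 0" "D1 > 0" "D2 > 0"
    using t a J m by (auto simp: b_def D0_def D1_def D2_def)
  have h0: "urn_potential a J t = N0 / D0" by (simp add: urn_potential_def N0_def D0_def)
  have h1: "urn_potential a J (t + b) = N1 / D1"
    by (simp add: urn_potential_def N1_def D1_def algebra_simps)
  have h2: "urn_potential a (J + m) t = N0 / D2"
    by (simp add: urn_potential_def N0_def D2_def algebra_simps)
  have lhs: "urn_potential a J t + m / b * (urn_potential a J (t + b) - urn_potential a J t)
      = (a * N0 * D1 * D2 + m * N1 * D0 * D2) / (b * D0 * D1 * D2)"
    unfolding h0 h1 using pos by (simp add: field_simps) (simp add: b_def algebra_simps)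
  have rhs: "urn_potential a (J + m) t = (b * N0 * D0 * D1) / (b * D0 * D1 * D2)"
    unfolding h2 using pos by (simp add: field_simps)
  have "b * N0 * D0 * D1 - (a * N0 * D1 * D2 + m * N1 * D0 * D2)
      = t * a * J * m * (2*t*a + 2*t*m + 2*a*a + a*J + 3*a*m + J*m + m*m)"
    unfolding b_def N0_def D0_def N1_def D1_def D2_def by algebra
  also have "\<dots> \<ge> 0" using t a J m by (intro mult_nonneg_nonneg add_nonneg_nonneg) auto
  finally have "(a * N0 * D1 * D2 + m * N1 * D0 * D2) / (b * D0 * D1 * D2)
      \<le> (b * N0 * D0 * D1) / (b * D0 * D1 * D2)"
    using pos by (intro divide_right_mono) auto
  then show ?thesis using lhs rhs by (simp add: b_def)
qed

text \<open>\<open>binom_avg p k \<phi>\<close> is the mean of \<open>\<phi> B\<close> for \<open>B\<close> binomial with parameters \<open>k\<close> and \<open>p\<close>,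
  computed by conditioning on the first trial.\<close>
fun binom_avg :: "real \<Rightarrow> nat \<Rightarrow> (nat \<Rightarrow> real) \<Rightarrow> real" where
  "binom_avg p 0 \<phi> = \<phi> 0"
| binom_avg_Suc:
    "binom_avg p (Suc k) \<phi> = (1 - p) * binom_avg p k \<phi> + p * binom_avg p k (\<lambda>i. \<phi> (Suc i))"

lemma binom_avg_add: "binom_avg p k (\<lambda>i. \<phi> i + \<psi> i) = binom_avg p k \<phi> + binom_avg p k \<psi>"
  by (induction k arbitrary: \<phi> \<psi>) (simp_all add: algebra_simps)

lemma binom_avg_cmult: "binom_avg p k (\<lambda>i. c * \<phi> i) = c * binom_avg p k \<phi>"
  by (induction k arbitrary: \<phi>) (simp_all add: algebra_simps)

lemma binom_avg_diff: "binom_avg p k (\<lambda>i. \<phi> i - \<psi> i) = binom_avg p k \<phi> - binom_avg p k \<psi>"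
  using binom_avg_add[of p k \<phi> "\<lambda>i. - \<psi> i"] binom_avg_cmult[of p k "-1" \<psi>] by simp

lemma binom_avg_const: "binom_avg p k (\<lambda>i. c) = c"
  by (induction k) (simp_all add: algebra_simps)

lemma binom_avg_mono:
  assumes "0 \<le> p" "p \<le> 1" "\<And>i. \<phi> i \<le> \<psi> i"
  shows "binom_avg p k \<phi> \<le> binom_avg p k \<psi>"
  using assms(3)
proof (induction k arbitrary: \<phi> \<psi>)
  case 0
  then show ?case by simp
next
  case (Suc k)
  then have "binom_avg p k \<phi> \<le> binom_avg p k \<psi>"
    "binom_avg p k (\<lambda>i. \<phi> (Suc i)) \<le> binom_avg p k (\<lambda>i. \<psi> (Suc i))"
    by auto
  then show ?case using assms(1,2) by (simp add: add_mono mult_left_mono)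
qed

lemma binom_avg_of_nat: "binom_avg p k real = real k * p"
proof (induction k)
  case 0
  then show ?case by simp
next
  case (Suc k)
  have "binom_avg p k (\<lambda>i. real (Suc i)) = real k * p + 1"
    using binom_avg_add[of p k real "\<lambda>_. 1"] by (simp add: binom_avg_const Suc add.commute)
  then show ?case using Suc by (simp add: algebra_simps)
qed

lemma binom_avg_size_bias:
  "(real k + 1) * p * binom_avg p k (\<lambda>i. \<phi> (Suc i)) = binom_avg p (Suc k) (\<lambda>j. real j * \<phi> j)"
proof (induction k arbitrary: \<phi>)
  case 0
  then show ?case by simp
next
  case (Suc k)
  have shift: "binom_avg p (Suc k) (\<lambda>j. real (Suc j) * \<phi> (Suc j))
      = binom_avg p (Suc k) (\<lambda>j. real j * \<phi> (Suc j)) + binom_avg p (Suc k) (\<lambda>j. \<phi> (Suc j))"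
    by (simp only: binom_avg_add[symmetric] of_nat_Suc distrib_right mult_1 add.commute)
  have "binom_avg p (Suc (Suc k)) (\<lambda>j. real j * \<phi> j)
      = (1 - p) * binom_avg p (Suc k) (\<lambda>j. real j * \<phi> j)
        + p * binom_avg p (Suc k) (\<lambda>j. real (Suc j) * \<phi> (Suc j))"
    by (simp only: binom_avg_Suc)
  also have "\<dots> = (1 - p) * ((real k + 1) * p * binom_avg p k (\<lambda>i. \<phi> (Suc i)))
        + p * ((real k + 1) * p * binom_avg p k (\<lambda>i. \<phi> (Suc (Suc i)))
               + binom_avg p (Suc k) (\<lambda>j. \<phi> (Suc j)))"
    unfolding shift Suc[of \<phi>, symmetric] Suc[of "\<lambda>j. \<phi> (Suc j)", symmetric] ..
  also have "\<dots> = (real k + 1) * p * ((1 - p) * binom_avg p k (\<lambda>i. \<phi> (Suc i))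
        + p * binom_avg p k (\<lambda>i. \<phi> (Suc (Suc i)))) + p * binom_avg p (Suc k) (\<lambda>j. \<phi> (Suc j))"
    by (simp only: algebra_simps)
  also have "\<dots> = (real (Suc k) + 1) * p * binom_avg p (Suc k) (\<lambda>j. \<phi> (Suc j))"
    by (simp only: binom_avg_Suc) (simp add: algebra_simps)
  finally show ?case ..
qed
lemma convex_on_binom_avg:
  assumes "0 \<le> p" "p \<le> 1" "\<And>i. convex_on S (F i)"
  shows "convex_on S (\<lambda>y. binom_avg p k (\<lambda>i. F i y))"
  using assms(3)
proof (induction k arbitrary: F)
  case 0
  then show ?case by simp
next
  case (Suc k)
  have "convex_on S (\<lambda>y. binom_avg p k (\<lambda>i. F i y))"
    using Suc.IH Suc.prems .
  moreover have "convex_on S (\<lambda>y. binom_avg p k (\<lambda>i. F (Suc i) y))"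
    using Suc.IH[of "\<lambda>i. F (Suc i)"] Suc.prems .
  ultimately have "convex_on S (\<lambda>y. (1 - p) * binom_avg p k (\<lambda>i. F i y)
      + p * binom_avg p k (\<lambda>i. F (Suc i) y))"
    using assms(1,2) by (intro convex_on_add convex_on_cmul) auto
  then show ?case by simp
qed

lemma frac_le_tangent:
  fixes E b x \<mu> :: real
  assumes "E > 0" "b > 0" "x \<ge> 0" "\<mu> \<ge> 0"
  shows "x / (E + b * x) \<le> \<mu> / (E + b * \<mu>) + E / (E + b * \<mu>)^2 * (x - \<mu>)"
proof -
  define A where "A = E + b * x"
  define B where "B = E + b * \<mu>"
  have pos: "A > 0" "B > 0" using assms by (auto simp: A_def B_def add_pos_nonneg)
  have "\<mu> / B + E / B^2 * (x - \<mu>) - x / A = E * b * (x - \<mu>)^2 / (A * B^2)"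
    using pos unfolding A_def B_def
    by (simp add: divide_simps power2_eq_square) (simp add: algebra_simps)
  moreover have "E * b * (x - \<mu>)^2 / (A * B^2) \<ge> 0" using pos assms by simp
  ultimately show ?thesis unfolding A_def B_def by linarith
qed

lemma inverse_tangent_le:
  fixes w z :: real
  assumes w: "w > 0" and z: "z > 0"
  shows "1 / w - (z - w) / w^2 \<le> 1 / z"
proof -
  have "(2 * w - z) * z \<le> w^2"
    using zero_le_power2[of "z - w"] by (simp add: power2_eq_square algebra_simps)
  then have "(2 * w - z) * z / (w^2 * z) \<le> w^2 / (w^2 * z)"
    using w z by (intro divide_right_mono) auto
  moreover have "1 / w - (z - w) / w^2 = (2 * w - z) / w^2"
    using w by (simp add: field_simps power2_eq_square)
  ultimately show ?thesis using w z by (simp add: power2_eq_square)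
qed

text \<open>The mean of \<open>1 / (c + y + \<beta> * B)\<close>, \<open>B\<close> binomial: the urn in which every draw adds \<open>\<beta>\<close>
  with probability \<open>p = m / \<beta>\<close> and nothing otherwise is the extremal one among all replacement
  laws on \<open>[0, \<beta>]\<close> with mean \<open>m\<close>.\<close>
definition binom_inverse :: "real \<Rightarrow> real \<Rightarrow> real \<Rightarrow> nat \<Rightarrow> real \<Rightarrow> real" where
  "binom_inverse p \<beta> c k y = binom_avg p k (\<lambda>i. 1 / (c + y + \<beta> * real i))"

lemma binom_inverse_0: "binom_inverse p \<beta> c 0 y = 1 / (c + y)"
  by (simp add: binom_inverse_def)

lemma binom_inverse_Suc:
  "binom_inverse p \<beta> c (Suc k) y
    = (1 - p) * binom_inverse p \<beta> c k y + p * binom_inverse p \<beta> c k (y + \<beta>)"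
  by (simp add: binom_inverse_def algebra_simps)

lemma borel_measurable_binom_inverse [measurable]: "binom_inverse p \<beta> c k \<in> borel_measurable borel"
proof (induction k)
  case 0
  then show ?case by (simp add: binom_inverse_0[abs_def])
next
  case (Suc k)
  have "(\<lambda>y. binom_inverse p \<beta> c k (y + \<beta>)) \<in> borel_measurable borel"
    using measurable_compose[OF _ Suc] by measurable
  then show ?case unfolding binom_inverse_Suc[abs_def] using Suc by measurable
qed

lemma binom_inverse_bounds:
  assumes "0 \<le> p" "p \<le> 1" "c + y > 0" "\<beta> \<ge> 0"
  shows "0 \<le> binom_inverse p \<beta> c k y" "binom_inverse p \<beta> c k y \<le> 1 / (c + y)"
proof -
  have "binom_avg p k (\<lambda>i. 0) \<le> binom_inverse p \<beta> c k y" unfolding binom_inverse_def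
    using assms by (intro binom_avg_mono) auto
  then show "0 \<le> binom_inverse p \<beta> c k y" by (simp add: binom_avg_const)
  have "binom_inverse p \<beta> c k y \<le> binom_avg p k (\<lambda>i. 1 / (c + y))" unfolding binom_inverse_def
    using assms by (intro binom_avg_mono frac_le) auto
  then show "binom_inverse p \<beta> c k y \<le> 1 / (c + y)" by (simp add: binom_avg_const)
qed

lemma convex_on_binom_inverse:
  assumes "0 \<le> p" "p \<le> 1" "c \<ge> 0" "\<beta> \<ge> 0"
  shows "convex_on {0<..} (binom_inverse p \<beta> c k)"
proof -
  have "convex_on {0<..} (\<lambda>y. 1 / ((c + \<beta> * real i) + y))" for i
  proof -
    have "0 \<le> c + \<beta> * real i" using assms by simp
    then show ?thesis by (intro convex_on_inverse_add) auto
  qed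
  then have "convex_on {0<..} (\<lambda>y. binom_avg p k (\<lambda>i. 1 / ((c + \<beta> * real i) + y)))"
    using assms by (intro convex_on_binom_avg)
  then show ?thesis unfolding binom_inverse_def by (simp add: algebra_simps)
qed

text \<open>Jensen's inequality for the concave \<open>\<lambda>j. j / (c + y - \<beta> + \<beta> * j)\<close>, applied to the
  size-biased binomial law.\<close>
lemma binom_inverse_le:
  assumes p: "0 < p" "p \<le> 1" and \<beta>: "\<beta> > 0" and cy: "c + y > \<beta>"
  shows "binom_inverse p \<beta> c k y \<le> 1 / (c + y - \<beta> + \<beta> * p * (real k + 1))"
proof -
  define E where "E = c + y - \<beta>"
  define \<mu> where "\<mu> = (real k + 1) * p"
  have E: "E > 0" using cy by (simp add: E_def)
  have \<mu>: "\<mu> > 0" using p by (simp add: \<mu>_def)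
  have "binom_inverse p \<beta> c k y = binom_avg p k (\<lambda>i. (\<lambda>j. 1 / (E + \<beta> * real j)) (Suc i))"
    unfolding binom_inverse_def E_def by (simp add: algebra_simps)
  then have "\<mu> * binom_inverse p \<beta> c k y
      = binom_avg p (Suc k) (\<lambda>j. real j * (1 / (E + \<beta> * real j)))"
    unfolding \<mu>_def using binom_avg_size_bias[of k p "\<lambda>j. 1 / (E + \<beta> * real j)"] by simp
  also have "\<dots> \<le> binom_avg p (Suc k) (\<lambda>j. \<mu> / (E + \<beta> * \<mu>) + E / (E + \<beta> * \<mu>)^2 * (real j - \<mu>))"
    using frac_le_tangent[OF E \<beta> _ less_imp_le[OF \<mu>]] p by (intro binom_avg_mono) auto
  also have "\<dots> = \<mu> / (E + \<beta> * \<mu>)"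
  proof -
    have "real (Suc k) * p = \<mu>" by (simp add: \<mu>_def)
    then show ?thesis
      by (simp only: binom_avg_add binom_avg_cmult binom_avg_diff binom_avg_const
          binom_avg_of_nat) simp
  qed
  finally have "\<mu> * binom_inverse p \<beta> c k y \<le> \<mu> * (1 / (E + \<beta> * \<mu>))" by simp
  then have "binom_inverse p \<beta> c k y \<le> 1 / (E + \<beta> * \<mu>)"
    using \<mu> by (rule mult_left_le_imp_le)
  moreover have "E + \<beta> * \<mu> = c + y - \<beta> + \<beta> * p * (real k + 1)"
    by (simp add: E_def \<mu>_def)
  ultimately show ?thesis by simp
qed

lemma inverse_gap_le:
  fixes \<beta> m c d D :: real and k :: nat
  assumes m: "0 < m" "m \<le> \<beta>" and cd: "0 \<le> c" "c \<le> d" and D: "D \<ge> 2 * \<beta>"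
  shows "1 / (c + D - \<beta> + m * (real k + 1)) - 1 / (d + D + m * real k)
     \<le> (\<beta> - m + d) / m * (1 / (c + D - \<beta> + m * real k) - 1 / (c + D - \<beta> + m * real (k + 1)))"
proof -
  define b0 where "b0 = c + D - \<beta> + m * real k"
  define b1 where "b1 = c + D - \<beta> + m * real (k + 1)"
  define w where "w = d + D + m * real k"
  have "m * real k \<ge> 0" "m * real (k + 1) \<ge> 0" using m by simp_all
  then have pos: "b0 > 0" "b1 > 0" "w > 0" "b0 \<le> w"
    unfolding b0_def b1_def w_def using assms by linarith+
  have "1 / (c + D - \<beta> + m * (real k + 1)) - 1 / (d + D + m * real k) = (d - c + \<beta> - m) / (b1 * w)"
    using pos unfolding b1_def w_def by (simp add: divide_simps) (simp add: algebra_simps)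
  also have "\<dots> \<le> (\<beta> - m + d) / (b1 * w)"
    using pos cd by (intro divide_right_mono) auto
  also have "\<dots> \<le> (\<beta> - m + d) / (b0 * b1)"
  proof -
    have "b1 * b0 \<le> b1 * w" using pos by (intro mult_left_mono) auto
    then show ?thesis using pos m cd by (intro divide_left_mono) (auto simp: mult.commute)
  qed
  also have "\<dots> = (\<beta> - m + d) / m * (1 / b0 - 1 / b1)"
    using pos m unfolding b0_def b1_def by (simp add: divide_simps) (simp add: algebra_simps)
  finally show ?thesis by (simp add: b0_def b1_def)
qed

definition gap_bound :: "real \<Rightarrow> real \<Rightarrow> real \<Rightarrow> real \<Rightarrow> nat \<Rightarrow> real \<Rightarrow> real" where
  "gap_bound \<beta> m c d k t =
    (\<beta> - m + d) / m * (1 / (c + t - \<beta> + m * real k) - 1 / (c + t - \<beta> + m * real (k + 1)))"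

lemma borel_measurable_gap_bound [measurable]: "gap_bound \<beta> m c d k \<in> borel_measurable borel"
  unfolding gap_bound_def by measurable

lemma gap_bound_abs_le:
  fixes \<beta> m c d t :: real
  assumes m: "0 < m" "m \<le> \<beta>" and c: "0 \<le> c" and t: "2 * \<beta> \<le> t"
  shows "\<bar>gap_bound \<beta> m c d k t\<bar> \<le> \<bar>(\<beta> - m + d) / m\<bar> * (2 / \<beta>)"
proof -
  have "0 \<le> m * real k" "0 \<le> m * real (k + 1)" using m by simp_all
  then have "\<beta> \<le> c + t - \<beta> + m * real k" "\<beta> \<le> c + t - \<beta> + m * real (k + 1)"
    using c t by linarith+
  moreover have "\<beta> > 0" using m by simp
  ultimately have "0 \<le> 1 / (c + t - \<beta> + m * real k)" "1 / (c + t - \<beta> + m * real k) \<le> 1 / \<beta>"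
    "0 \<le> 1 / (c + t - \<beta> + m * real (k + 1))" "1 / (c + t - \<beta> + m * real (k + 1)) \<le> 1 / \<beta>"
    by (simp_all add: frac_le)
  then have "\<bar>1 / (c + t - \<beta> + m * real k) - 1 / (c + t - \<beta> + m * real (k + 1))\<bar> \<le> 2 / \<beta>"
    by (intro abs_leI) linarith+
  then show ?thesis unfolding gap_bound_def abs_mult by (intro mult_left_mono) auto
qed

lemma binom_inverse_gap_le:
  fixes \<beta> m c d t :: real
  assumes m: "0 < m" "m \<le> \<beta>" and cd: "0 \<le> c" "c \<le> d" and t: "2 * \<beta> \<le> t"
  shows "binom_inverse (m / \<beta>) \<beta> c k t - 1 / (d + t + m * real k) \<le> gap_bound \<beta> m c d k t"
proof -
  have "binom_inverse (m / \<beta>) \<beta> c k t \<le> 1 / (c + t - \<beta> + \<beta> * (m / \<beta>) * (real k + 1))"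
    using assms by (intro binom_inverse_le) auto
  also have "\<beta> * (m / \<beta>) * (real k + 1) = m * (real k + 1)" using m by simp
  finally show ?thesis using inverse_gap_le[OF m cd t, of k] unfolding gap_bound_def by linarith
qed

lemma (in sigma_finite_subalgebra) real_cond_exp_le_of_integral_le:
  fixes f g :: "'a \<Rightarrow> real"
  assumes f: "integrable M f" and g: "integrable M g" and gF: "g \<in> borel_measurable F"
    and le: "\<And>A. A \<in> sets F \<Longrightarrow> (\<integral>x. indicator A x * f x \<partial>M) \<le> (\<integral>x. indicator A x * g x \<partial>M)"
  shows "AE x in M. real_cond_exp M F f x \<le> g x"
proof -
  let ?h = "real_cond_exp M F f"
  define B where "B = {x \<in> space M. g x < ?h x}"
  have BF: "B \<in> sets F"
  proof -
    have "{x \<in> space F. g x < ?h x} \<in> sets F" using gF by measurable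
    then show ?thesis unfolding B_def using subalg by (simp add: subalgebra_def)
  qed
  have BM: "B \<in> sets M" using BF subalg by (auto simp: subalgebra_def)
  have hi: "integrable M ?h" using real_cond_exp_int(1)[OF f] .
  have "(\<integral>x. indicator B x * ?h x \<partial>M) = (\<integral>x. indicator B x * f x \<partial>M)"
    using real_cond_exp_intA[OF f BF] unfolding set_lebesgue_integral_def by simp
  then have "(\<integral>x. indicator B x * (?h x - g x) \<partial>M) \<le> 0"
    using le[OF BF] integrable_mult_indicator[OF BM hi] integrable_mult_indicator[OF BM g]
    by (simp add: right_diff_distrib)
  moreover have nonneg: "\<And>x. 0 \<le> indicator B x * (?h x - g x)" by (auto simp: indicator_def B_def)
  moreover have "0 \<le> (\<integral>x. indicator B x * (?h x - g x) \<partial>M)"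
    by (rule Bochner_Integration.integral_nonneg) (use nonneg in auto)
  ultimately have "(\<integral>x. indicator B x * (?h x - g x) \<partial>M) = 0" by linarith
  moreover have "integrable M (\<lambda>x. indicator B x * (?h x - g x))"
    using integrable_mult_indicator[OF BM Bochner_Integration.integrable_diff[OF hi g]] by simp
  ultimately have "AE x in M. indicator B x * (?h x - g x) = 0"
    using integral_nonneg_eq_0_iff_AE nonneg by blast
  then show ?thesis using AE_space by eventually_elim (auto simp: B_def indicator_def)
qed

lemma AE_uniform_interior: "AE v in uniform_measure lborel {0..1::real}. v \<in> {0<..<1}"
proof (rule AE_uniform_measureI)
  show "AE v in lborel. v \<in> {0..1::real} \<longrightarrow> v \<in> {0<..<1}"
    using AE_lborel_singleton[of 0] AE_lborel_singleton[of 1] by eventually_elim auto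
qed simp

text \<open>The law of the drawing variables \<open>U\<close> never enters: the bounds only use that, given the
  past, every replacement has mean \<open>m\<close> whichever colour is drawn.\<close>
locale rru_model =
  fixes M :: "'w measure" and \<mu> \<nu> :: "real measure"
    and \<beta> m x y :: real
    and U V W :: "nat \<Rightarrow> 'w \<Rightarrow> real"
  assumes m_pos: "0 < m"
    and \<mu>: "prob_on_interval \<beta> \<mu>" and \<nu>: "prob_on_interval \<beta> \<nu>"
    and mean_\<mu>: "(\<integral>t. t \<partial>\<mu>) = m" and mean_\<nu>: "(\<integral>t. t \<partial>\<nu>) = m"
    and init: "x \<ge> 0" "y \<ge> 0" "(x, y) \<noteq> (0, 0)"
    and M: "prob_space M"
    and VW_indep: "prob_space.indep_vars M (\<lambda>_. borel \<Otimes>\<^sub>M borel) (\<lambda>n \<omega>. (V n \<omega>, W n \<omega>)) UNIV"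
    and V_unif: "\<And>n. distr M borel (V n) = uniform_measure lborel {0..1}"
    and W_unif: "\<And>n. distr M borel (W n) = uniform_measure lborel {0..1}"
    and U_VW_indep: "prob_space.indep_set M
        (sets (vimage_algebra (space M) (\<lambda>\<omega> n. U n \<omega>) (Pi\<^sub>M UNIV (\<lambda>_. borel))))
        (sets (vimage_algebra (space M) (\<lambda>\<omega> n. (V n \<omega>, W n \<omega>))
                 (Pi\<^sub>M UNIV (\<lambda>_. borel \<Otimes>\<^sub>M borel))))"
begin

sublocale P: prob_space M by (rule M)

abbreviation "X i \<omega> \<equiv> fst (rru \<mu> \<nu> x y U V W i \<omega>)"
abbreviation "Y i \<omega> \<equiv> snd (rru \<mu> \<nu> x y U V W i \<omega>)"
abbreviation "D i \<omega> \<equiv> rru_D \<mu> \<nu> x y U V W i \<omega>"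
abbreviation "D0 \<equiv> x + y"

text \<open>\<open>draw i\<close> and \<open>added i\<close> describe the \<open>(i+1)\<close>-st draw, matching the recursion of \<open>rru\<close>.\<close>
abbreviation "draw i \<omega> \<equiv> U (Suc i) \<omega> \<le> X i \<omega> / (X i \<omega> + Y i \<omega>)"
abbreviation "added i \<omega> \<equiv>
  (if draw i \<omega> then quantile_fn \<mu> (V (Suc i) \<omega>) else quantile_fn \<nu> (W (Suc i) \<omega>))"

lemma X_Suc: "X (Suc i) \<omega> = X i \<omega> + (if draw i \<omega> then quantile_fn \<mu> (V (Suc i) \<omega>) else 0)"
  and Y_Suc: "Y (Suc i) \<omega> = Y i \<omega> + (if draw i \<omega> then 0 else quantile_fn \<nu> (W (Suc i) \<omega>))"
  by (simp_all add: Let_def split: prod.split)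

lemma D_eq: "D i \<omega> = X i \<omega> + Y i \<omega>"
  by (simp add: rru_D_def)

lemma D_0: "D 0 \<omega> = D0"
  by (simp add: rru_D_def)

lemma D_Suc: "D (Suc i) \<omega> = D i \<omega> + added i \<omega>"
  unfolding D_eq X_Suc Y_Suc by auto

lemma D0_pos: "D0 > 0"
  using init by auto

lemma measurable_VW: "(\<lambda>\<omega>. (V n \<omega>, W n \<omega>)) \<in> measurable M (borel \<Otimes>\<^sub>M borel)"
  using VW_indep unfolding P.indep_vars_def by auto

lemma measurable_V [measurable]: "V n \<in> borel_measurable M"
  using measurable_compose[OF measurable_VW measurable_fst] by simp

lemma measurable_W [measurable]: "W n \<in> borel_measurable M"
  using measurable_compose[OF measurable_VW measurable_snd] by simp

lemma AE_VW_interior: "AE \<omega> in M. \<forall>n. V n \<omega> \<in> {0<..<1} \<and> W n \<omega> \<in> {0<..<1}"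
proof -
  have "AE \<omega> in M. V n \<omega> \<in> {0<..<1}" for n
    using AE_distrD[OF measurable_V] AE_uniform_interior unfolding V_unif by blast
  moreover have "AE \<omega> in M. W n \<omega> \<in> {0<..<1}" for n
    using AE_distrD[OF measurable_W] AE_uniform_interior unfolding W_unif by blast
  ultimately show ?thesis by (simp add: AE_all_countable)
qed

lemma AE_quantile_V_bounds: "AE \<omega> in M. 0 \<le> quantile_fn \<mu> (V n \<omega>) \<and> quantile_fn \<mu> (V n \<omega>) \<le> \<beta>"
  using AE_VW_interior by eventually_elim (use quantile_fn_range[OF \<mu>] in auto)

lemma AE_quantile_W_bounds: "AE \<omega> in M. 0 \<le> quantile_fn \<nu> (W n \<omega>) \<and> quantile_fn \<nu> (W n \<omega>) \<le> \<beta>"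
  using AE_VW_interior by eventually_elim (use quantile_fn_range[OF \<nu>] in auto)

lemma AE_added_bounds: "AE \<omega> in M. \<forall>i. 0 \<le> added i \<omega> \<and> added i \<omega> \<le> \<beta>"
  using AE_VW_interior
  by eventually_elim (use quantile_fn_range[OF \<mu>] quantile_fn_range[OF \<nu>] in auto)

lemma AE_D_ge_D0: "AE \<omega> in M. \<forall>i. D0 \<le> D i \<omega>"
  using AE_added_bounds
proof eventually_elim
  case (elim \<omega>)
  show ?case
  proof
    fix i
    show "D0 \<le> D i \<omega>"
    proof (induction i)
      case (Suc i)
      then show ?case using elim unfolding D_Suc by (meson add_increasing2)
    qed (simp add: D_0)
  qed
qed

lemma integrable_quantile_V: "integrable M (\<lambda>\<omega>. quantile_fn \<mu> (V n \<omega>))"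
proof (rule P.integrable_const_bound[where B=\<beta>])
  show "AE \<omega> in M. norm (quantile_fn \<mu> (V n \<omega>)) \<le> \<beta>"
    using AE_quantile_V_bounds[of n] by eventually_elim auto
qed (use borel_measurable_quantile_fn[OF \<mu>] in simp)

lemma integrable_quantile_W: "integrable M (\<lambda>\<omega>. quantile_fn \<nu> (W n \<omega>))"
proof (rule P.integrable_const_bound[where B=\<beta>])
  show "AE \<omega> in M. norm (quantile_fn \<nu> (W n \<omega>)) \<le> \<beta>"
    using AE_quantile_W_bounds[of n] by eventually_elim auto
qed (use borel_measurable_quantile_fn[OF \<nu>] in simp)

lemma integral_quantile_V: "(\<integral>\<omega>. quantile_fn \<mu> (V n \<omega>) \<partial>M) = m"
  using integral_distr[OF measurable_V borel_measurable_quantile_fn[OF \<mu>], of n]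
  unfolding V_unif integral_quantile_fn_uniform[OF \<mu>] mean_\<mu> by simp

lemma integral_quantile_W: "(\<integral>\<omega>. quantile_fn \<nu> (W n \<omega>) \<partial>M) = m"
  using integral_distr[OF measurable_W borel_measurable_quantile_fn[OF \<nu>], of n]
  unfolding W_unif integral_quantile_fn_uniform[OF \<nu>] mean_\<nu> by simp

lemma m_le_\<beta>: "m \<le> \<beta>"
proof -
  have "m = (\<integral>\<omega>. quantile_fn \<mu> (V 0 \<omega>) \<partial>M)" using integral_quantile_V by simp
  also have "\<dots> \<le> (\<integral>\<omega>. \<beta> \<partial>M)"
    using AE_quantile_V_bounds[of 0] integrable_quantile_V by (intro integral_mono_AE) auto
  finally show ?thesis by (simp add: P.prob_space)
qed

lemma \<beta>_pos: "\<beta> > 0"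
  using m_pos m_le_\<beta> by simp

abbreviation "sigma_U \<equiv> vimage_algebra (space M) (\<lambda>\<omega> n. U n \<omega>) (Pi\<^sub>M UNIV (\<lambda>_. borel))"
abbreviation "sigma_VW j \<equiv> vimage_algebra (space M) (\<lambda>\<omega>. (V j \<omega>, W j \<omega>)) (borel \<Otimes>\<^sub>M borel)"
abbreviation "sigma_VW_all \<equiv>
  vimage_algebra (space M) (\<lambda>\<omega> n. (V n \<omega>, W n \<omega>)) (Pi\<^sub>M UNIV (\<lambda>_. borel \<Otimes>\<^sub>M borel))"

text \<open>The one-step estimates condition on \<open>past i\<close> rather than on the filtration \<open>rru_filt\<close>: it
  contains \<open>rru_filt\<close> at time \<open>i\<close>, and being generated by independent pieces it is visibly
  independent of the next pair \<open>(V (Suc i), W (Suc i))\<close>.\<close>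
abbreviation "past_gen i \<equiv> sets sigma_U \<union> (\<Union>j\<le>i. sets (sigma_VW j))"
abbreviation "past i \<equiv> sigma (space M) (past_gen i)"

lemma sets_sigma_U_subset: "sets sigma_U \<subseteq> sets M"
  using P.indep_setD_ev1[OF U_VW_indep] .

lemma sets_sigma_VW_all_subset: "sets sigma_VW_all \<subseteq> sets M"
  using P.indep_setD_ev2[OF U_VW_indep] .

lemma sets_sigma_VW:
  "sets (sigma_VW j) = {(\<lambda>\<omega>. (V j \<omega>, W j \<omega>)) -` A \<inter> space M | A. A \<in> sets (borel \<Otimes>\<^sub>M borel)}"
  by (rule sets_vimage_algebra2) (auto simp: space_pair_measure)

lemma sets_sigma_VW_subset_all: "sets (sigma_VW j) \<subseteq> sets sigma_VW_all"
proof
  fix S assume "S \<in> sets (sigma_VW j)"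
  then obtain A where A: "A \<in> sets (borel \<Otimes>\<^sub>M borel)"
    and S: "S = (\<lambda>\<omega>. (V j \<omega>, W j \<omega>)) -` A \<inter> space M"
    unfolding sets_sigma_VW by auto
  let ?P = "Pi\<^sub>M UNIV (\<lambda>_. borel \<Otimes>\<^sub>M borel)"
  have "(\<lambda>f. f j) \<in> measurable ?P (borel \<Otimes>\<^sub>M borel)"
    by (rule measurable_component_singleton) simp
  then have "(\<lambda>f. f j) -` A \<inter> space ?P \<in> sets ?P"
    using A by (rule measurable_sets)
  moreover have "S = (\<lambda>\<omega> n. (V n \<omega>, W n \<omega>)) -` ((\<lambda>f. f j) -` A \<inter> space ?P) \<inter> space M"
    unfolding S by (auto simp: space_PiM space_pair_measure)
  ultimately show "S \<in> sets sigma_VW_all" using in_vimage_algebra by blast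
qed

lemma sets_sigma_VW_subset: "sets (sigma_VW j) \<subseteq> sets M"
  using sets_sigma_VW_subset_all sets_sigma_VW_all_subset by blast

lemma past_gen_Pow: "past_gen i \<subseteq> Pow (space M)"
  using sets_sigma_U_subset sets_sigma_VW_subset sets.sets_into_space by blast

lemma sets_past: "sets (past i) = sigma_sets (space M) (past_gen i)"
  using past_gen_Pow by simp

lemma space_past: "space (past i) = space M"
  using past_gen_Pow by simp

lemma sets_past_subset: "sets (past i) \<subseteq> sets M"
  unfolding sets_past using sets_sigma_U_subset sets_sigma_VW_subset
  by (intro sets.sigma_sets_subset) blast

lemma sets_past_mono: "i \<le> j \<Longrightarrow> sets (past i) \<subseteq> sets (past j)"
  unfolding sets_past by (intro sigma_sets_mono') auto

lemma measurable_past_mono: "f \<in> measurable (past i) N \<Longrightarrow> i \<le> j \<Longrightarrow> f \<in> measurable (past j) N"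
  using measurable_mono[OF order_refl refl sets_past_mono] by (auto simp: space_past)

lemma measurable_past_M: "f \<in> measurable (past i) N \<Longrightarrow> f \<in> measurable M N"
  using measurable_mono[OF order_refl refl sets_past_subset space_past] by blast

lemma measurable_U_past: "U n \<in> borel_measurable (past i)"
proof -
  have "(\<lambda>\<omega> n. U n \<omega>) \<in> measurable sigma_U (Pi\<^sub>M UNIV (\<lambda>_. borel))"
    by (rule measurable_vimage_algebra1) (auto simp: space_PiM)
  then have "U n \<in> measurable sigma_U borel"
    using measurable_compose[OF _ measurable_component_singleton[of n UNIV "\<lambda>_. borel"]] by simp
  then show ?thesis
    using measurable_mono[of borel borel sigma_U "past i"] by (auto simp: space_past sets_past)
qed

lemma measurable_VW_sigma_VW: "(\<lambda>\<omega>. (V j \<omega>, W j \<omega>)) \<in> measurable (sigma_VW j) (borel \<Otimes>\<^sub>M borel)"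
  by (rule measurable_vimage_algebra1) (auto simp: space_pair_measure)

lemma measurable_VW_past:
  assumes "j \<le> i"
  shows "(\<lambda>\<omega>. (V j \<omega>, W j \<omega>)) \<in> measurable (past i) (borel \<Otimes>\<^sub>M borel)"
  using measurable_VW_sigma_VW measurable_mono[of "borel \<Otimes>\<^sub>M borel" _ "sigma_VW j" "past i"] assms
  by (auto simp: space_past sets_past)

lemma measurable_V_past: "j \<le> i \<Longrightarrow> V j \<in> borel_measurable (past i)"
  and measurable_W_past: "j \<le> i \<Longrightarrow> W j \<in> borel_measurable (past i)"
  using measurable_compose[OF measurable_VW_past measurable_fst]
    measurable_compose[OF measurable_VW_past measurable_snd] by simp_all

lemma measurable_XY_past:
  "j \<le> i \<Longrightarrow> (\<lambda>\<omega>. X j \<omega>) \<in> borel_measurable (past i) \<and> (\<lambda>\<omega>. Y j \<omega>) \<in> borel_measurable (past i)"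
proof (induction j)
  case (Suc j)
  then have "(\<lambda>\<omega>. X j \<omega>) \<in> borel_measurable (past i)" "(\<lambda>\<omega>. Y j \<omega>) \<in> borel_measurable (past i)"
    by simp_all
  note [measurable] = this measurable_U_past
    measurable_V_past[OF Suc.prems] measurable_W_past[OF Suc.prems]
    borel_measurable_quantile_fn[OF \<mu>] borel_measurable_quantile_fn[OF \<nu>]
  show ?case unfolding X_Suc Y_Suc by measurable
qed simp

lemma measurable_X_past [measurable]: "(\<lambda>\<omega>. X i \<omega>) \<in> borel_measurable (past i)"
  and measurable_Y_past [measurable]: "(\<lambda>\<omega>. Y i \<omega>) \<in> borel_measurable (past i)"
  using measurable_XY_past[of i i] by simp_all

lemma measurable_D_past [measurable]: "(\<lambda>\<omega>. D i \<omega>) \<in> borel_measurable (past i)"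
  unfolding D_eq by measurable

lemma measurable_draw_past [measurable]: "Measurable.pred (past i) (draw i)"
proof -
  note [measurable] = measurable_U_past[of "Suc i" i]
  show ?thesis by measurable
qed

lemma measurable_D [measurable]: "(\<lambda>\<omega>. D i \<omega>) \<in> borel_measurable M"
  using measurable_past_M[OF measurable_D_past] .

lemma indep_sets_sigma_VW: "P.indep_sets (\<lambda>j. sets (sigma_VW j)) UNIV"
  using VW_indep unfolding P.indep_vars_def2 sets_sigma_VW by simp

abbreviation "piece ob \<equiv> case ob of None \<Rightarrow> sets sigma_U | Some j \<Rightarrow> sets (sigma_VW j)"

lemma indep_sets_piece: "P.indep_sets piece UNIV"
proof (rule P.indep_setsI)
  fix ob :: "nat option"
  show "piece ob \<subseteq> P.events"
    using sets_sigma_U_subset sets_sigma_VW_subset by (cases ob) auto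
next
  fix A :: "nat option \<Rightarrow> 'w set" and J
  assume J: "J \<noteq> {}" "J \<subseteq> UNIV" "finite J" and A: "\<forall>j\<in>J. A j \<in> piece j"
  define K where "K = Some -` J"
  have K: "finite K" unfolding K_def using J(3) by (simp add: finite_vimageI)
  have AK: "\<forall>j\<in>K. A (Some j) \<in> sets (sigma_VW j)" using A by (auto simp: K_def)
  have prob_K: "P.prob (\<Inter>j\<in>K. A (Some j)) = (\<Prod>j\<in>K. P.prob (A (Some j)))" if "K \<noteq> {}"
    using P.indep_setsD[OF indep_sets_sigma_VW, of K "\<lambda>j. A (Some j)"] K AK that by auto
  have J_eq: "J - {None} = Some ` K" unfolding K_def by (auto intro: image_eqI[of _ Some])
  have prod_K: "(\<Prod>j\<in>Some ` K. P.prob (A j)) = (\<Prod>j\<in>K. P.prob (A (Some j)))"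
    by (subst prod.reindex) auto
  show "P.prob (\<Inter>j\<in>J. A j) = (\<Prod>j\<in>J. P.prob (A j))"
  proof (cases "None \<in> J")
    case False
    then have "J = Some ` K" using J_eq by auto
    then show ?thesis using prob_K prod_K J(1) by auto
  next
    case True
    then have J_ins: "J = insert None (Some ` K)" using J_eq by auto
    have A_None: "A None \<in> sets sigma_U" using A True by auto
    show ?thesis
    proof (cases "K = {}")
      case True
      then show ?thesis using J_ins by simp
    next
      case False
      have "(\<Inter>j\<in>K. A (Some j)) \<in> sets sigma_VW_all"
        using AK sets_sigma_VW_subset_all K False by (intro sets.finite_INT) auto
      then have "P.prob (A None \<inter> (\<Inter>j\<in>K. A (Some j))) = P.prob (A None) * P.prob (\<Inter>j\<in>K. A (Some j))"
        using P.indep_setD[OF U_VW_indep A_None] by simp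
      moreover have "(\<Inter>j\<in>J. A j) = A None \<inter> (\<Inter>j\<in>K. A (Some j))" unfolding J_ins by auto
      moreover have "(\<Prod>j\<in>J. P.prob (A j)) = P.prob (A None) * (\<Prod>j\<in>K. P.prob (A (Some j)))"
        unfolding J_ins using K prod_K by (subst prod.insert) auto
      ultimately show ?thesis using prob_K[OF False] by simp
    qed
  qed
qed

lemma indep_set_past_next: "P.indep_set (sets (past i)) (sets (sigma_VW (Suc i)))"
proof -
  define I where "I = (\<lambda>b. if b then insert None (Some ` {..i}) else {Some (Suc i)})"
  have "P.indep_sets (\<lambda>b. sigma_sets (space M) (\<Union>ob\<in>I b. piece ob)) UNIV"
  proof (rule P.indep_sets_collect_sigma)
    show "P.indep_sets piece (\<Union>b. I b)" by (rule P.indep_sets_mono_index[OF _ indep_sets_piece]) auto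
    show "Int_stable (piece ob)" for ob by (cases ob) (auto simp: Int_stable_def)
    show "disjoint_family_on I UNIV" unfolding disjoint_family_on_def I_def by auto
  qed
  moreover have "sigma_sets (space M) (\<Union>ob\<in>I True. piece ob) = sets (past i)"
    unfolding sets_past I_def by (auto intro!: arg_cong[where f="sigma_sets (space M)"])
  moreover have "sigma_sets (space M) (\<Union>ob\<in>I False. piece ob) = sets (sigma_VW (Suc i))"
    using sets.sigma_sets_eq[of "sigma_VW (Suc i)"] unfolding I_def by simp
  ultimately show ?thesis unfolding P.indep_set_def
    by (rule_tac P.indep_sets_mono_sets) (auto split: bool.split)
qed

lemma indep_var_past_next:
  assumes Z: "Z \<in> borel_measurable (past i)" and Q: "Q \<in> borel_measurable (sigma_VW (Suc i))"
  shows "P.indep_var borel Z borel Q"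
  unfolding P.indep_var_def P.indep_vars_def2
proof
  have "Q \<in> borel_measurable M"
    using Q measurable_mono[of borel borel "sigma_VW (Suc i)" M] sets_sigma_VW_subset by auto
  then show "\<forall>b\<in>UNIV. P.random_variable (case_bool borel borel b) (case_bool Z Q b)"
    using measurable_past_M[OF Z] by (auto split: bool.split)
  show "P.indep_sets
      (\<lambda>b. {case_bool Z Q b -` A \<inter> space M |A. A \<in> sets (case_bool borel borel b)}) UNIV"
  proof (rule P.indep_sets_mono_sets[OF indep_set_past_next[of i, unfolded P.indep_set_def]])
    fix b :: bool
    show "{case_bool Z Q b -` A \<inter> space M |A. A \<in> sets (case_bool borel borel b)}
        \<subseteq> (case b of True \<Rightarrow> sets (past i) | False \<Rightarrow> sets (sigma_VW (Suc i)))"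
      using measurable_sets[OF Z] measurable_sets[OF Q] by (cases b) (auto simp: space_past)
  qed
qed

lemma integral_mult_next:
  assumes Z: "Z \<in> borel_measurable (past i)" "integrable M Z"
    and Q: "Q \<in> borel_measurable (sigma_VW (Suc i))" "integrable M Q" "(\<integral>\<omega>. Q \<omega> \<partial>M) = m"
  shows "integrable M (\<lambda>\<omega>. Z \<omega> * Q \<omega>)" "(\<integral>\<omega>. Z \<omega> * Q \<omega> \<partial>M) = (\<integral>\<omega>. Z \<omega> \<partial>M) * m"
  using P.indep_var_integrable[OF indep_var_past_next[OF Z(1) Q(1)] Z(2) Q(2)]
    P.indep_var_lebesgue_integral[OF indep_var_past_next[OF Z(1) Q(1)] Z(2) Q(2)] Q(3)
  by simp_all

lemma measurable_quantile_V_next: "(\<lambda>\<omega>. quantile_fn \<mu> (V j \<omega>)) \<in> borel_measurable (sigma_VW j)"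
  using measurable_VW_sigma_VW[of j] borel_measurable_quantile_fn[OF \<mu>] by measurable

lemma measurable_quantile_W_next: "(\<lambda>\<omega>. quantile_fn \<nu> (W j \<omega>)) \<in> borel_measurable (sigma_VW j)"
  using measurable_VW_sigma_VW[of j] borel_measurable_quantile_fn[OF \<nu>] by measurable

lemma integrable_of_D:
  fixes B :: real
  assumes "f \<in> borel_measurable borel" and "\<And>t. D0 \<le> t \<Longrightarrow> \<bar>f t\<bar> \<le> B"
  shows "integrable M (\<lambda>\<omega>. f (D i \<omega>))"
proof (rule P.integrable_const_bound[where B=B])
  show "AE \<omega> in M. norm (f (D i \<omega>)) \<le> B"
    using AE_D_ge_D0 by eventually_elim (use assms(2) in auto)
qed (use assms(1) in simp)

lemma integrable_indicator_of_D:
  fixes B :: real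
  assumes "A \<in> sets M" "f \<in> borel_measurable borel" "\<And>t. D0 \<le> t \<Longrightarrow> \<bar>f t\<bar> \<le> B"
  shows "integrable M (\<lambda>\<omega>. indicator A \<omega> * f (D i \<omega>))"
  using integrable_mult_indicator[OF assms(1) integrable_of_D[OF assms(2,3)]] by simp

lemma integral_mult_added:
  assumes Z: "Z \<in> borel_measurable (past i)" "integrable M Z"
  shows "integrable M (\<lambda>\<omega>. Z \<omega> * added i \<omega>)" "(\<integral>\<omega>. Z \<omega> * added i \<omega> \<partial>M) = m * (\<integral>\<omega>. Z \<omega> \<partial>M)"
proof -
  define Z\<^sub>\<mu> where "Z\<^sub>\<mu> \<omega> = (if draw i \<omega> then Z \<omega> else 0)" for \<omega>
  define Z\<^sub>\<nu> where "Z\<^sub>\<nu> \<omega> = (if draw i \<omega> then 0 else Z \<omega>)" for \<omega>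
  have meas: "Z\<^sub>\<mu> \<in> borel_measurable (past i)" "Z\<^sub>\<nu> \<in> borel_measurable (past i)"
    using Z(1) unfolding Z\<^sub>\<mu>_def Z\<^sub>\<nu>_def by measurable
  have int: "integrable M Z\<^sub>\<mu>" "integrable M Z\<^sub>\<nu>"
    using measurable_past_M[OF meas(1)] measurable_past_M[OF meas(2)]
    by (auto intro!: Bochner_Integration.integrable_bound[OF Z(2)] simp: Z\<^sub>\<mu>_def Z\<^sub>\<nu>_def)
  note next_\<mu> = integral_mult_next[OF meas(1) int(1) measurable_quantile_V_next
      integrable_quantile_V integral_quantile_V]
  note next_\<nu> = integral_mult_next[OF meas(2) int(2) measurable_quantile_W_next
      integrable_quantile_W integral_quantile_W]
  have split: "Z \<omega> * added i \<omega>
      = Z\<^sub>\<mu> \<omega> * quantile_fn \<mu> (V (Suc i) \<omega>) + Z\<^sub>\<nu> \<omega> * quantile_fn \<nu> (W (Suc i) \<omega>)" for \<omega>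
    by (simp add: Z\<^sub>\<mu>_def Z\<^sub>\<nu>_def)
  show "integrable M (\<lambda>\<omega>. Z \<omega> * added i \<omega>)"
    unfolding split using next_\<mu>(1) next_\<nu>(1) by simp
  have "(\<integral>\<omega>. Z \<omega> * added i \<omega> \<partial>M) = m * ((\<integral>\<omega>. Z\<^sub>\<mu> \<omega> \<partial>M) + (\<integral>\<omega>. Z\<^sub>\<nu> \<omega> \<partial>M))"
    unfolding split using next_\<mu> next_\<nu> by (simp add: algebra_simps)
  also have "(\<integral>\<omega>. Z\<^sub>\<mu> \<omega> \<partial>M) + (\<integral>\<omega>. Z\<^sub>\<nu> \<omega> \<partial>M) = (\<integral>\<omega>. Z\<^sub>\<mu> \<omega> + Z\<^sub>\<nu> \<omega> \<partial>M)"
    using int by simp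
  also have "(\<lambda>\<omega>. Z\<^sub>\<mu> \<omega> + Z\<^sub>\<nu> \<omega>) = Z"
    by (simp add: Z\<^sub>\<mu>_def Z\<^sub>\<nu>_def fun_eq_iff)
  finally show "(\<integral>\<omega>. Z \<omega> * added i \<omega> \<partial>M) = m * (\<integral>\<omega>. Z \<omega> \<partial>M)" .
qed

lemma integral_next_le_drift:
  assumes A: "A \<in> sets (past i)"
    and [measurable]: "g \<in> borel_measurable borel" "a \<in> borel_measurable borel"
      "b \<in> borel_measurable borel"
    and bounded: "\<And>t. D0 \<le> t \<Longrightarrow> \<bar>g t\<bar> \<le> B \<and> \<bar>a t\<bar> \<le> B \<and> \<bar>b t\<bar> \<le> B"
    and linear_bound: "\<And>t r. D0 \<le> t \<Longrightarrow> 0 \<le> r \<Longrightarrow> r \<le> \<beta> \<Longrightarrow> g (t + r) \<le> a t + r * b t"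
  shows "(\<integral>\<omega>. indicator A \<omega> * g (D (Suc i) \<omega>) \<partial>M)
    \<le> (\<integral>\<omega>. indicator A \<omega> * (a (D i \<omega>) + m * b (D i \<omega>)) \<partial>M)"
proof -
  have AM: "A \<in> sets M" using A sets_past_subset by blast
  have [measurable]: "indicator A \<in> borel_measurable (past i)" using A by simp
  have int_a: "integrable M (\<lambda>\<omega>. indicator A \<omega> * a (D i \<omega>))"
    using bounded by (intro integrable_indicator_of_D[OF AM]) auto
  have int_b: "integrable M (\<lambda>\<omega>. indicator A \<omega> * b (D i \<omega>))"
    using bounded by (intro integrable_indicator_of_D[OF AM]) auto
  have int_g: "integrable M (\<lambda>\<omega>. indicator A \<omega> * g (D (Suc i) \<omega>))"
    using bounded by (intro integrable_indicator_of_D[OF AM]) auto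
  have "(\<lambda>\<omega>. indicator A \<omega> * b (D i \<omega>)) \<in> borel_measurable (past i)" by measurable
  note added = integral_mult_added[OF this int_b]
  have "(\<integral>\<omega>. indicator A \<omega> * g (D (Suc i) \<omega>) \<partial>M)
      \<le> (\<integral>\<omega>. indicator A \<omega> * a (D i \<omega>) + indicator A \<omega> * b (D i \<omega>) * added i \<omega> \<partial>M)"
  proof (rule integral_mono_AE)
    show "AE \<omega> in M. indicator A \<omega> * g (D (Suc i) \<omega>)
        \<le> indicator A \<omega> * a (D i \<omega>) + indicator A \<omega> * b (D i \<omega>) * added i \<omega>"
      using AE_D_ge_D0 AE_added_bounds
    proof eventually_elim
      case (elim \<omega>)
      then have "g (D (Suc i) \<omega>) \<le> a (D i \<omega>) + added i \<omega> * b (D i \<omega>)"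
        unfolding D_Suc by (intro linear_bound) auto
      then show ?case by (auto simp: indicator_def algebra_simps)
    qed
  qed (use int_g int_a added(1) in auto)
  also have "\<dots> = (\<integral>\<omega>. indicator A \<omega> * a (D i \<omega>) \<partial>M) + m * (\<integral>\<omega>. indicator A \<omega> * b (D i \<omega>) \<partial>M)"
    using int_a added by simp
  also have "\<dots> = (\<integral>\<omega>. indicator A \<omega> * (a (D i \<omega>) + m * b (D i \<omega>)) \<partial>M)"
    using int_a int_b by (simp add: algebra_simps)
  finally show ?thesis .
qed

lemma integrable_indicator_chord_of_D:
  fixes B :: real
  assumes "A \<in> sets M" "g \<in> borel_measurable borel" "\<And>t. D0 \<le> t \<Longrightarrow> \<bar>g t\<bar> \<le> B"
  shows "integrable M (\<lambda>\<omega>. indicator A \<omega> * (g (D i \<omega>) + m / \<beta> * (g (D i \<omega> + \<beta>) - g (D i \<omega>))))"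
proof (rule integrable_indicator_of_D[OF assms(1)])
  show "(\<lambda>t. g t + m / \<beta> * (g (t + \<beta>) - g t)) \<in> borel_measurable borel"
    using assms(2) by measurable
  fix t assume t: "D0 \<le> t"
  define p where "p = m / \<beta>"
  have p: "0 \<le> p" "p \<le> 1" using m_pos m_le_\<beta> \<beta>_pos by (auto simp: p_def)
  have "\<bar>g t + p * (g (t + \<beta>) - g t)\<bar> = \<bar>(1 - p) * g t + p * g (t + \<beta>)\<bar>"
    by (simp add: algebra_simps)
  also have "\<dots> \<le> (1 - p) * B + p * B"
    using assms(3)[OF t] assms(3)[of "t + \<beta>"] t \<beta>_pos p
    by (intro abs_triangle_ineq[THEN order_trans] add_mono)
       (auto simp: abs_mult intro!: mult_left_mono)
  finally show "\<bar>g t + m / \<beta> * (g (t + \<beta>) - g t)\<bar> \<le> B" by (simp add: p_def algebra_simps)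
qed

lemma integral_next_le_chord:
  assumes A: "A \<in> sets (past i)"
    and g_meas [measurable]: "g \<in> borel_measurable borel" and g: "convex_on {0<..} g"
    and bounded: "\<And>t. D0 \<le> t \<Longrightarrow> \<bar>g t\<bar> \<le> B"
  shows "(\<integral>\<omega>. indicator A \<omega> * g (D (Suc i) \<omega>) \<partial>M)
    \<le> (\<integral>\<omega>. indicator A \<omega> * (g (D i \<omega>) + m / \<beta> * (g (D i \<omega> + \<beta>) - g (D i \<omega>))) \<partial>M)"
proof -
  define slope where "slope t = (g (t + \<beta>) - g t) / \<beta>" for t
  have "(\<integral>\<omega>. indicator A \<omega> * g (D (Suc i) \<omega>) \<partial>M)
      \<le> (\<integral>\<omega>. indicator A \<omega> * (g (D i \<omega>) + m * slope (D i \<omega>)) \<partial>M)"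
  proof (rule integral_next_le_drift[OF A g_meas g_meas, where B="B + 2 * B / \<beta>"])
    show "slope \<in> borel_measurable borel" unfolding slope_def by measurable
    fix t assume t: "D0 \<le> t"
    have g_t: "\<bar>g t\<bar> \<le> B" "\<bar>g (t + \<beta>)\<bar> \<le> B" using bounded t \<beta>_pos by auto
    have "\<bar>slope t\<bar> = \<bar>g (t + \<beta>) - g t\<bar> / \<beta>" unfolding slope_def using \<beta>_pos by simp
    also have "\<dots> \<le> 2 * B / \<beta>" using g_t \<beta>_pos by (intro divide_right_mono) auto
    finally have "\<bar>slope t\<bar> \<le> 2 * B / \<beta>" .
    moreover have "0 \<le> 2 * B / \<beta>" using g_t \<beta>_pos by simp
    ultimately show "\<bar>g t\<bar> \<le> B + 2 * B / \<beta> \<and> \<bar>g t\<bar> \<le> B + 2 * B / \<beta> \<and> \<bar>slope t\<bar> \<le> B + 2 * B / \<beta>"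
      using g_t by linarith
  next
    fix t r assume "D0 \<le> t" "0 \<le> r" "r \<le> \<beta>"
    then show "g (t + r) \<le> g t + r * slope t"
      using convex_on_le_chord[OF g, of t r \<beta>] D0_pos by (simp add: slope_def)
  qed
  then show ?thesis by (simp add: slope_def)
qed

lemma space_in_past: "space M \<in> sets (past i)"
  using sets.top[of "past i"] by (simp add: space_past)

lemma integral_urn_potential_next_le:
  assumes J: "J \<ge> 0"
  shows "(\<integral>\<omega>. urn_potential (\<beta> - m) J (D (Suc i) \<omega>) \<partial>M)
    \<le> (\<integral>\<omega>. urn_potential (\<beta> - m) (J + m) (D i \<omega>) \<partial>M)"
proof -
  define a where "a = \<beta> - m"
  have a: "a \<ge> 0" using m_le_\<beta> by (simp add: a_def)
  have bounded: "\<bar>urn_potential a J' t\<bar> \<le> 1 / D0" if "D0 \<le> t" "J' \<ge> 0" for t J'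
  proof -
    have "t > 0" using that D0_pos by linarith
    then have "0 \<le> urn_potential a J' t" "urn_potential a J' t \<le> 1 / t"
      using urn_potential_bounds[of t a J'] a that(2) by auto
    moreover have "1 / t \<le> 1 / D0" using that D0_pos by (simp add: frac_le)
    ultimately show ?thesis by simp
  qed
  have "(\<integral>\<omega>. urn_potential a J (D (Suc i) \<omega>) \<partial>M)
      = (\<integral>\<omega>. indicator (space M) \<omega> * urn_potential a J (D (Suc i) \<omega>) \<partial>M)"
    by (intro Bochner_Integration.integral_cong) auto
  also have "\<dots> \<le> (\<integral>\<omega>. indicator (space M) \<omega> * (urn_potential a J (D i \<omega>)
      + m / \<beta> * (urn_potential a J (D i \<omega> + \<beta>) - urn_potential a J (D i \<omega>))) \<partial>M)"
    using bounded J
    by (intro integral_next_le_chord[OF space_in_past] convex_on_urn_potential a) auto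
  also have "\<dots> \<le> (\<integral>\<omega>. urn_potential a (J + m) (D i \<omega>) \<partial>M)"
  proof (rule integral_mono_AE)
    show "integrable M (\<lambda>\<omega>. indicator (space M) \<omega> * (urn_potential a J (D i \<omega>)
      + m / \<beta> * (urn_potential a J (D i \<omega> + \<beta>) - urn_potential a J (D i \<omega>))))"
      using bounded J by (intro integrable_indicator_chord_of_D) auto
    show "integrable M (\<lambda>\<omega>. urn_potential a (J + m) (D i \<omega>))"
      using bounded J m_pos by (intro integrable_of_D[where B="1 / D0"]) auto
    show "AE \<omega> in M. indicator (space M) \<omega> * (urn_potential a J (D i \<omega>)
        + m / \<beta> * (urn_potential a J (D i \<omega> + \<beta>) - urn_potential a J (D i \<omega>)))
      \<le> urn_potential a (J + m) (D i \<omega>)"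
      using AE_D_ge_D0 AE_space
    proof eventually_elim
      case (elim \<omega>)
      then have "D i \<omega> > 0" using D0_pos by (meson less_le_trans)
      then show ?case
        using urn_potential_drift_le[OF _ a J m_pos] elim by (simp add: a_def)
    qed
  qed
  finally show ?thesis by (simp add: a_def)
qed

lemma integral_inverse_D_le:
  "(\<integral>\<omega>. 1 / D k \<omega> \<partial>M) \<le> (1 + (\<beta> - m) / D0) / (D0 + m * (real k - 1) + \<beta>)"
proof -
  define a where "a = \<beta> - m"
  have chain: "(\<integral>\<omega>. urn_potential a 0 (D k \<omega>) \<partial>M)
      \<le> (\<integral>\<omega>. urn_potential a (m * real j) (D (k - j) \<omega>) \<partial>M)" if "j \<le> k" for j
    using that
  proof (induction j)
    case (Suc j)
    have "k - j = Suc (k - Suc j)" using Suc.prems by simp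
    then have "(\<integral>\<omega>. urn_potential a (m * real j) (D (k - j) \<omega>) \<partial>M)
        \<le> (\<integral>\<omega>. urn_potential a (m * real j + m) (D (k - Suc j) \<omega>) \<partial>M)"
      unfolding a_def using m_pos by (simp add: integral_urn_potential_next_le)
    then show ?case using Suc by (simp add: algebra_simps)
  qed simp
  have "(\<integral>\<omega>. 1 / D k \<omega> \<partial>M) = (\<integral>\<omega>. urn_potential a 0 (D k \<omega>) \<partial>M)"
  proof (rule integral_cong_AE)
    show "AE \<omega> in M. 1 / D k \<omega> = urn_potential a 0 (D k \<omega>)"
      using AE_D_ge_D0
    proof eventually_elim
      case (elim \<omega>)
      then have "D k \<omega> > 0" using D0_pos by (meson less_le_trans)
      then show ?case using m_le_\<beta> by (simp add: urn_potential_def a_def)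
    qed
  qed auto
  also have "\<dots> \<le> urn_potential a (m * real k) D0"
    using chain[of k] by (simp add: D_0 P.prob_space)
  also have "\<dots> = (1 + (\<beta> - m) / D0) / (D0 + m * (real k - 1) + \<beta>)"
    using D0_pos unfolding urn_potential_def a_def by (simp add: field_simps)
  finally show ?thesis .
qed

abbreviation "filt n \<equiv> rru_filt M \<mu> \<nu> x y U V W n"
abbreviation "obs i \<omega> \<equiv> (rru_ind \<mu> \<nu> x y U V W i \<omega>, quantile_fn \<mu> (V i \<omega>), quantile_fn \<nu> (W i \<omega>))"
abbreviation "obs_space \<equiv> (count_space UNIV \<Otimes>\<^sub>M borel \<Otimes>\<^sub>M borel) :: (bool \<times> real \<times> real) measure"
abbreviation "filt_gen n \<equiv> (\<Union>i\<in>{1..n}. {obs i -` A \<inter> space M | A. A \<in> sets obs_space})"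

lemma rru_ind_Suc: "rru_ind \<mu> \<nu> x y U V W (Suc j) \<omega> = draw j \<omega>"
  by (simp add: rru_ind_def split: prod.split)

lemma sets_filt: "sets (filt n) = sigma_sets (space M) (filt_gen n)"
  unfolding rru_filt_def by (subst sets_measure_of) auto

lemma space_filt: "space (filt n) = space M"
  unfolding rru_filt_def by (subst space_measure_of) auto

lemma measurable_obs_past: "i \<in> {1..n} \<Longrightarrow> obs i \<in> measurable (past n) obs_space"
proof -
  assume "i \<in> {1..n}"
  then obtain j where j: "i = Suc j" "Suc j \<le> n" by (cases i) auto
  have "Measurable.pred (past n) (draw j)"
    using measurable_past_mono[OF measurable_draw_past[of j]] j by simp
  moreover have "(\<lambda>\<omega>. quantile_fn \<mu> (V (Suc j) \<omega>)) \<in> borel_measurable (past n)"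
    "(\<lambda>\<omega>. quantile_fn \<nu> (W (Suc j) \<omega>)) \<in> borel_measurable (past n)"
    using measurable_compose[OF measurable_V_past borel_measurable_quantile_fn[OF \<mu>]]
      measurable_compose[OF measurable_W_past borel_measurable_quantile_fn[OF \<nu>]] j by auto
  ultimately show ?thesis unfolding j(1) rru_ind_Suc by (intro measurable_Pair)
qed

lemma sets_filt_subset_past: "sets (filt n) \<subseteq> sets (past n)"
  unfolding sets_filt
proof (rule sets.sigma_sets_subset[of _ "past n", unfolded space_past])
  show "filt_gen n \<subseteq> sets (past n)"
    using measurable_sets[OF measurable_obs_past] by (auto simp: space_past)
qed

lemma subalgebra_filt: "subalgebra M (filt n)"
  unfolding subalgebra_def using sets_filt_subset_past sets_past_subset space_filt by blast

lemma measurable_obs_filt: "i \<in> {1..n} \<Longrightarrow> obs i \<in> measurable (filt n) obs_space"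
  unfolding measurable_def
proof safe
  fix A assume "i \<in> {1..n}" "A \<in> sets obs_space"
  then have "obs i -` A \<inter> space M \<in> filt_gen n" by blast
  then show "obs i -` A \<inter> space (filt n) \<in> sets (filt n)" unfolding sets_filt space_filt by auto
qed (auto simp: space_pair_measure)

lemma measurable_XY_filt:
  "j \<le> n \<Longrightarrow> (\<lambda>\<omega>. X j \<omega>) \<in> borel_measurable (filt n) \<and> (\<lambda>\<omega>. Y j \<omega>) \<in> borel_measurable (filt n)"
proof (induction j)
  case (Suc j)
  then have [measurable]: "(\<lambda>\<omega>. X j \<omega>) \<in> borel_measurable (filt n)"
    "(\<lambda>\<omega>. Y j \<omega>) \<in> borel_measurable (filt n)"
    by simp_all
  have "Suc j \<in> {1..n}" using Suc.prems by simp
  note obs = measurable_obs_filt[OF this]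
  have [measurable]: "Measurable.pred (filt n) (rru_ind \<mu> \<nu> x y U V W (Suc j))"
    "(\<lambda>\<omega>. quantile_fn \<mu> (V (Suc j) \<omega>)) \<in> borel_measurable (filt n)"
    "(\<lambda>\<omega>. quantile_fn \<nu> (W (Suc j) \<omega>)) \<in> borel_measurable (filt n)"
    using measurable_compose[OF obs measurable_fst]
      measurable_compose[OF measurable_compose[OF obs measurable_snd] measurable_fst]
      measurable_compose[OF measurable_compose[OF obs measurable_snd] measurable_snd]
    by simp_all
  show ?case unfolding X_Suc Y_Suc rru_ind_Suc[symmetric] by measurable
qed simp

lemma measurable_D_filt: "(\<lambda>\<omega>. D n \<omega>) \<in> borel_measurable (filt n)"
  using measurable_XY_filt[of n n] unfolding D_eq by (auto intro: borel_measurable_add)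

lemma binom_inverse_abs_le:
  assumes "c \<ge> 0" "D0 \<le> t"
  shows "\<bar>binom_inverse (m / \<beta>) \<beta> c j t\<bar> \<le> 1 / D0"
proof -
  have "c + t > 0" using assms D0_pos by linarith
  then have "0 \<le> binom_inverse (m / \<beta>) \<beta> c j t" "binom_inverse (m / \<beta>) \<beta> c j t \<le> 1 / (c + t)"
    using binom_inverse_bounds[of "m / \<beta>" c t \<beta> j] m_pos m_le_\<beta> \<beta>_pos by auto
  moreover have "1 / (c + t) \<le> 1 / D0" using assms D0_pos by (simp add: frac_le)
  ultimately show ?thesis by simp
qed

lemma inverse_shift_abs_le:
  assumes "d \<ge> 0" "D0 \<le> t"
  shows "\<bar>1 / (d + t + m * real j)\<bar> \<le> 1 / D0"
proof -
  have "0 \<le> m * real j" using m_pos by simp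
  then have "D0 \<le> d + t + m * real j" using assms by linarith
  then show ?thesis using D0_pos by (simp add: frac_le)
qed

lemma integral_binom_inverse_next_le:
  assumes A: "A \<in> sets (past i)" and c: "c \<ge> 0"
  shows "(\<integral>\<omega>. indicator A \<omega> * binom_inverse (m / \<beta>) \<beta> c j (D (Suc i) \<omega>) \<partial>M)
    \<le> (\<integral>\<omega>. indicator A \<omega> * binom_inverse (m / \<beta>) \<beta> c (Suc j) (D i \<omega>) \<partial>M)"
proof -
  have "convex_on {0<..} (binom_inverse (m / \<beta>) \<beta> c j)"
    using m_pos m_le_\<beta> \<beta>_pos c by (intro convex_on_binom_inverse) auto
  then have "(\<integral>\<omega>. indicator A \<omega> * binom_inverse (m / \<beta>) \<beta> c j (D (Suc i) \<omega>) \<partial>M)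
      \<le> (\<integral>\<omega>. indicator A \<omega> * (binom_inverse (m / \<beta>) \<beta> c j (D i \<omega>) + m / \<beta> *
            (binom_inverse (m / \<beta>) \<beta> c j (D i \<omega> + \<beta>) - binom_inverse (m / \<beta>) \<beta> c j (D i \<omega>))) \<partial>M)"
    using binom_inverse_abs_le[OF c] by (intro integral_next_le_chord[OF A]) auto
  also have "\<dots> = (\<integral>\<omega>. indicator A \<omega> * binom_inverse (m / \<beta>) \<beta> c (Suc j) (D i \<omega>) \<partial>M)"
    unfolding binom_inverse_Suc by (simp add: algebra_simps)
  finally show ?thesis .
qed

lemma integral_inverse_shift_next_ge:
  assumes A: "A \<in> sets (past i)" and d: "d \<ge> 0"
  shows "(\<integral>\<omega>. indicator A \<omega> * (1 / (d + D i \<omega> + m * real (Suc j))) \<partial>M)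
    \<le> (\<integral>\<omega>. indicator A \<omega> * (1 / (d + D (Suc i) \<omega> + m * real j)) \<partial>M)"
proof -
  define w where "w t = d + t + m * real (Suc j)" for t
  define g where "g t = - (1 / (d + t + m * real j))" for t
  define a where "a t = - (1 / w t + m / (w t)^2)" for t
  define b where "b t = 1 / (w t)^2" for t
  have mj: "m * real j \<ge> 0" "m * real (Suc j) \<ge> 0" using m_pos by auto
  have "(\<integral>\<omega>. indicator A \<omega> * g (D (Suc i) \<omega>) \<partial>M)
      \<le> (\<integral>\<omega>. indicator A \<omega> * (a (D i \<omega>) + m * b (D i \<omega>)) \<partial>M)"
  proof (rule integral_next_le_drift[OF A, where B="1 / D0 + m / D0^2 + 1 / D0^2"])
    show "g \<in> borel_measurable borel" "a \<in> borel_measurable borel" "b \<in> borel_measurable borel"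
      unfolding g_def a_def b_def w_def by measurable
  next
    fix t assume t: "D0 \<le> t"
    have w: "D0 \<le> w t" using t d mj unfolding w_def by linarith
    have "1 / w t \<le> 1 / D0" "1 / (w t)^2 \<le> 1 / D0^2"
      using w D0_pos by (simp_all add: frac_le power_mono)
    moreover have "m / (w t)^2 \<le> m / D0^2"
      using w D0_pos m_pos by (simp add: divide_left_mono power_mono)
    moreover have "\<bar>a t\<bar> = 1 / w t + m / (w t)^2"
    proof -
      have "0 \<le> 1 / w t + m / (w t)^2" using w D0_pos m_pos by simp
      then show ?thesis unfolding a_def by (simp only: abs_minus_cancel abs_of_nonneg)
    qed
    moreover have "\<bar>b t\<bar> = 1 / (w t)^2" by (simp add: b_def)
    moreover have "\<bar>g t\<bar> \<le> 1 / D0" using inverse_shift_abs_le[OF d t] by (simp add: g_def)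
    moreover have "0 \<le> m / D0^2" "0 \<le> 1 / D0^2" "0 \<le> 1 / D0" using D0_pos m_pos by auto
    ultimately show "\<bar>g t\<bar> \<le> 1 / D0 + m / D0^2 + 1 / D0^2 \<and> \<bar>a t\<bar> \<le> 1 / D0 + m / D0^2 + 1 / D0^2
        \<and> \<bar>b t\<bar> \<le> 1 / D0 + m / D0^2 + 1 / D0^2"
      by linarith
  next
    fix t r assume t: "D0 \<le> t" and r: "0 \<le> r" "r \<le> \<beta>"
    have "w t > 0" "d + (t + r) + m * real j > 0" using t r d mj D0_pos unfolding w_def by linarith+
    from inverse_tangent_le[OF this]
    have "1 / w t - (r - m) / (w t)^2 \<le> 1 / (d + (t + r) + m * real j)"
      by (simp add: w_def algebra_simps)
    then show "g (t + r) \<le> a t + r * b t"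
      unfolding g_def a_def b_def by (simp add: diff_divide_distrib algebra_simps)
  qed
  also have "\<dots> = (\<integral>\<omega>. - (indicator A \<omega> * (1 / (d + D i \<omega> + m * real (Suc j)))) \<partial>M)"
    by (rule Bochner_Integration.integral_cong) (auto simp: a_def b_def w_def)
  finally show ?thesis by (simp add: g_def)
qed

lemma integral_upper_chain:
  assumes A: "A \<in> sets (past n)" and c: "c \<ge> 0"
  shows "(\<integral>\<omega>. indicator A \<omega> * binom_inverse (m / \<beta>) \<beta> c j (D (n + k) \<omega>) \<partial>M)
    \<le> (\<integral>\<omega>. indicator A \<omega> * binom_inverse (m / \<beta>) \<beta> c (j + k) (D n \<omega>) \<partial>M)"
proof (induction k arbitrary: j)
  case (Suc k)
  have "A \<in> sets (past (n + k))" using A sets_past_mono[of n "n + k"] by auto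
  then show ?case
    using integral_binom_inverse_next_le[OF _ c, of A "n + k" j] Suc[of "Suc j"] by simp
qed simp

lemma integral_lower_chain:
  assumes A: "A \<in> sets (past n)" and d: "d \<ge> 0"
  shows "(\<integral>\<omega>. indicator A \<omega> * (1 / (d + D n \<omega> + m * real (j + k))) \<partial>M)
    \<le> (\<integral>\<omega>. indicator A \<omega> * (1 / (d + D (n + k) \<omega> + m * real j)) \<partial>M)"
proof (induction k arbitrary: j)
  case (Suc k)
  have "A \<in> sets (past (n + k))" using A sets_past_mono[of n "n + k"] by auto
  then show ?case
    using integral_inverse_shift_next_ge[OF _ d, of A "n + k" j] Suc[of "Suc j"] by simp
qed simp

lemma integral_inverse_gap_le:
  assumes A: "A \<in> sets (filt n)" and D0: "2 * \<beta> \<le> D0" and cd: "0 \<le> c" "c \<le> d"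
  shows "(\<integral>\<omega>. indicator A \<omega> * (1 / (c + D (k + n) \<omega>) - 1 / (d + D (k + n) \<omega>)) \<partial>M)
    \<le> (\<integral>\<omega>. indicator A \<omega> * gap_bound \<beta> m c d k (D n \<omega>) \<partial>M)"
proof -
  have A_past: "A \<in> sets (past n)" and A_M: "A \<in> sets M"
    using A sets_filt_subset_past sets_past_subset by blast+
  have d: "d \<ge> 0" using cd by simp
  let ?upper = "\<lambda>\<omega>. indicator A \<omega> * binom_inverse (m / \<beta>) \<beta> c k (D n \<omega>)"
  let ?lower = "\<lambda>\<omega>. indicator A \<omega> * (1 / (d + D n \<omega> + m * real k))"
  have int_upper: "integrable M ?upper"
    using binom_inverse_abs_le[OF cd(1)] by (intro integrable_indicator_of_D[OF A_M]) auto
  have int_lower: "integrable M ?lower"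
    using inverse_shift_abs_le[OF d] by (intro integrable_indicator_of_D[OF A_M]) auto
  have int_c: "integrable M (\<lambda>\<omega>. indicator A \<omega> * (1 / (c + D (n + k) \<omega>)))"
    using inverse_shift_abs_le[OF cd(1), of _ 0]
    by (intro integrable_indicator_of_D[OF A_M, where B="1 / D0"]) auto
  have int_d: "integrable M (\<lambda>\<omega>. indicator A \<omega> * (1 / (d + D (n + k) \<omega>)))"
    using inverse_shift_abs_le[OF d, of _ 0]
    by (intro integrable_indicator_of_D[OF A_M, where B="1 / D0"]) auto
  have "(\<integral>\<omega>. indicator A \<omega> * (1 / (c + D (k + n) \<omega>) - 1 / (d + D (k + n) \<omega>)) \<partial>M)
      = (\<integral>\<omega>. indicator A \<omega> * binom_inverse (m / \<beta>) \<beta> c 0 (D (n + k) \<omega>) \<partial>M)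
        - (\<integral>\<omega>. indicator A \<omega> * (1 / (d + D (n + k) \<omega> + m * real 0)) \<partial>M)"
    using int_c int_d by (simp add: binom_inverse_0 add.commute right_diff_distrib)
  also have "\<dots> \<le> (\<integral>\<omega>. ?upper \<omega> \<partial>M) - (\<integral>\<omega>. ?lower \<omega> \<partial>M)"
    using integral_upper_chain[OF A_past cd(1), of 0 k] integral_lower_chain[OF A_past d, of 0 k]
    by simp
  also have "\<dots> = (\<integral>\<omega>. ?upper \<omega> - ?lower \<omega> \<partial>M)"
    using int_upper int_lower by simp
  also have "\<dots> \<le> (\<integral>\<omega>. indicator A \<omega> * gap_bound \<beta> m c d k (D n \<omega>) \<partial>M)"
  proof (rule integral_mono_AE)
    show "integrable M (\<lambda>\<omega>. ?upper \<omega> - ?lower \<omega>)" using int_upper int_lower by simp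
    show "integrable M (\<lambda>\<omega>. indicator A \<omega> * gap_bound \<beta> m c d k (D n \<omega>))"
      using gap_bound_abs_le[OF m_pos m_le_\<beta> cd(1)] D0
      by (intro integrable_indicator_of_D[OF A_M, where B="\<bar>(\<beta> - m + d) / m\<bar> * (2 / \<beta>)"]) auto
    show "AE \<omega> in M. ?upper \<omega> - ?lower \<omega> \<le> indicator A \<omega> * gap_bound \<beta> m c d k (D n \<omega>)"
      using AE_D_ge_D0
    proof eventually_elim
      case (elim \<omega>)
      then have "2 * \<beta> \<le> D n \<omega>" using D0 by (meson order.trans)
      from binom_inverse_gap_le[OF m_pos m_le_\<beta> cd this, of k]
      show ?case by (auto simp: indicator_def)
    qed
  qed
  finally show ?thesis .
qed

lemma cond_exp_inverse_gap_le:
  assumes D0: "2 * \<beta> \<le> D0" and cd: "0 \<le> c" "c \<le> d"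
  shows "AE \<omega> in M. \<bar>real_cond_exp M (filt n)
      (\<lambda>\<omega>. 1 / (c + D (k + n) \<omega>) - 1 / (d + D (k + n) \<omega>)) \<omega>\<bar> \<le> gap_bound \<beta> m c d k (D n \<omega>)"
proof -
  interpret S: sigma_finite_subalgebra M "filt n"
    using subalgebra_filt P.finite_measure_axioms
    by (intro finite_measure_subalgebra_is_sigma_finite)
       (simp add: finite_measure_subalgebra_def finite_measure_subalgebra_axioms_def)
  define f where "f \<omega> = 1 / (c + D (k + n) \<omega>) - 1 / (d + D (k + n) \<omega>)" for \<omega>
  have f_int: "integrable M f"
  proof (unfold f_def, rule integrable_of_D[where B="2 / D0"])
    fix t assume "D0 \<le> t"
    then have "\<bar>1 / (c + t)\<bar> \<le> 1 / D0" "\<bar>1 / (d + t)\<bar> \<le> 1 / D0"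
      using inverse_shift_abs_le[of c t 0] inverse_shift_abs_le[of d t 0] cd by simp_all
    then show "\<bar>1 / (c + t) - 1 / (d + t)\<bar> \<le> 2 / D0"
      using abs_triangle_ineq4[of "1 / (c + t)" "1 / (d + t)"] by linarith
  qed measurable
  have "AE \<omega> in M. real_cond_exp M (filt n) f \<omega> \<le> gap_bound \<beta> m c d k (D n \<omega>)"
  proof (rule S.real_cond_exp_le_of_integral_le[OF f_int])
    show "integrable M (\<lambda>\<omega>. gap_bound \<beta> m c d k (D n \<omega>))"
      using gap_bound_abs_le[OF m_pos m_le_\<beta> cd(1)] D0
      by (intro integrable_of_D[where B="\<bar>(\<beta> - m + d) / m\<bar> * (2 / \<beta>)"]) auto
    show "(\<lambda>\<omega>. gap_bound \<beta> m c d k (D n \<omega>)) \<in> borel_measurable (filt n)"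
      using measurable_D_filt by measurable
    show "(\<integral>\<omega>. indicator A \<omega> * f \<omega> \<partial>M) \<le> (\<integral>\<omega>. indicator A \<omega> * gap_bound \<beta> m c d k (D n \<omega>) \<partial>M)"
      if "A \<in> sets (filt n)" for A
      using integral_inverse_gap_le[OF that D0 cd] unfolding f_def .
  qed
  moreover have "AE \<omega> in M. 0 \<le> real_cond_exp M (filt n) f \<omega>"
  proof (rule S.real_cond_exp_pos)
    show "AE \<omega> in M. 0 \<le> f \<omega>"
      using AE_D_ge_D0
    proof eventually_elim
      case (elim \<omega>)
      then have "0 < c + D (k + n) \<omega>" using D0_pos cd by (meson add_nonneg_pos less_le_trans)
      then show ?case using cd by (simp add: f_def frac_le)
    qed
  qed (use f_int in auto)
  ultimately show ?thesis unfolding f_def by eventually_elim auto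
qed

end

theorem lemmaA1:
  fixes M :: "'w measure" and \<mu> \<nu> :: "real measure"
    and m0 \<beta> m x y :: real
    and U V W :: "nat \<Rightarrow> 'w \<Rightarrow> real"
  assumes m0_pos: "0 < m0" and m0_le: "m0 \<le> \<beta>"
    and mu: "prob_on_interval \<beta> \<mu>" and nu: "prob_on_interval \<beta> \<nu>"
    and mean_mu: "(\<integral>t. t \<partial>\<mu>) = m" and mean_nu: "(\<integral>t. t \<partial>\<nu>) = m"
    and m_ge: "m0 \<le> m"
    and init: "x \<ge> 0" "y \<ge> 0" "(x, y) \<noteq> (0, 0)"
    and M: "prob_space M"
    and U_indep: "prob_space.indep_vars M (\<lambda>_. borel) U UNIV"
    and U_unif: "\<And>n. distr M borel (U n) = uniform_measure lborel {0..1}"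
    and VW_indep: "prob_space.indep_vars M (\<lambda>_. borel \<Otimes>\<^sub>M borel) (\<lambda>n \<omega>. (V n \<omega>, W n \<omega>)) UNIV"
    and VW_ident: "\<And>n. distr M (borel \<Otimes>\<^sub>M borel) (\<lambda>\<omega>. (V n \<omega>, W n \<omega>))
                      = distr M (borel \<Otimes>\<^sub>M borel) (\<lambda>\<omega>. (V 0 \<omega>, W 0 \<omega>))"
    and V_unif: "\<And>n. distr M borel (V n) = uniform_measure lborel {0..1}"
    and W_unif: "\<And>n. distr M borel (W n) = uniform_measure lborel {0..1}"
    and U_VW_indep: "prob_space.indep_set M
        (sets (vimage_algebra (space M) (\<lambda>\<omega> n. U n \<omega>) (Pi\<^sub>M UNIV (\<lambda>_. borel))))
        (sets (vimage_algebra (space M) (\<lambda>\<omega> n. (V n \<omega>, W n \<omega>))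
                 (Pi\<^sub>M UNIV (\<lambda>_. borel \<Otimes>\<^sub>M borel))))"
  shows "(\<forall>k\<ge>1. (\<integral>\<omega>. 1 / rru_D \<mu> \<nu> x y U V W k \<omega> \<partial>M)
            \<le> (1 + (\<beta> - m) / (x + y)) / ((x + y) + m * (real k - 1) + \<beta>))
       \<and> (x + y \<ge> 2 * \<beta> \<longrightarrow>
         (\<forall>k\<ge>1. \<forall>n\<ge>1. \<forall>c d. 0 \<le> c \<and> c \<le> d \<longrightarrow>
           (AE \<omega> in M.
              \<bar>real_cond_exp M (rru_filt M \<mu> \<nu> x y U V W n)
                 (\<lambda>\<omega>. 1 / (c + rru_D \<mu> \<nu> x y U V W (k + n) \<omega>)
                      - 1 / (d + rru_D \<mu> \<nu> x y U V W (k + n) \<omega>)) \<omega>\<bar>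
              \<le> (\<beta> - m + d) / m *
                 (1 / (c + rru_D \<mu> \<nu> x y U V W n \<omega> - \<beta> + m * real k)
                  - 1 / (c + rru_D \<mu> \<nu> x y U V W n \<omega> - \<beta> + m * real (k + 1))))))"
proof -
  interpret rru_model M \<mu> \<nu> \<beta> m x y U V W
    by (rule rru_model.intro) (use assms in auto)
  show ?thesis
    using integral_inverse_D_le cond_exp_inverse_gap_le[unfolded gap_bound_def] by simp
qed

end
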